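(* Let $p \geq 6$ and $q_1, q_2 \geq 4$ be integers, and let $L$ be the Laplacian of the graph $C_{q_1} \oplus K_p \oplus C_{q_2}$, with eigenvalues $\lambda_1(L) \geq \dots \geq \lambda_{p+q_1+q_2-2}(L)$. Let $q = \max\{q_1,q_2\}$ and let $\lambda_1(L_{C_q})$ denote the largest eigenvalue of the Laplacian of the path graph on $q-1$ vertices. Then $\lambda_1(L), \lambda_2(L) \in [p,p+2]$; $\lambda_j(L) = p$ for all $j \in \{3,\ldots,p-1\}$; $\lambda_p(L), \lambda_{p+1}(L) \in (0, \min\{\lambda_1(L_{C_q})+2,\, p\})$ (an interval contained in $(0,p)$ if $p\geq 6$); and $\lambda_j(L) \in [0,4)$ for all $j \in \{p+3,\ldots,p+q_1+q_2-2\}$.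
   Context: For integers $p \geq 3$, $q_1,q_2 \geq 2$, the graph $C_{q_1} \oplus K_p \oplus C_{q_2}$ has vertex set $\{-q_1-p+2,\ldots,-p\} \cup \{-p+1,\ldots,0\} \cup \{1,\ldots,q_2-1\}$ (so $p+q_1+q_2-2$ vertices). Its edges are: every pair of distinct vertices in $\{-p+1,\ldots,0\}$ (a complete graph), the edges $\{-p,-p+1\}$ and $\{0,1\}$, the edges $\{j,j+1\}$ for $-q_1-p+2 \leq j \leq -p-1$, and the edges $\{j,j+1\}$ for $1 \leq j \leq q_2-2$. The Laplacian $L$ is the matrix with $L_{ii}$ equal to the degree of vertex $i$, $L_{ij}=-1$ if $i \neq j$ are adjacent and $0$ otherwise. Eigenvalues are listed with multiplicity in non-increasing order. *)

theory Defs
  imports "Jordan_Normal_Form.Char_Poly"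
begin

text \<open>Eigenvalues of a square real matrix, listed with multiplicity in non-increasing order:
  the (unique) non-increasingly sorted list of length n whose linear factors multiply to the
  characteristic polynomial. (For symmetric real matrices such as Laplacians it exists.)\<close>
definition eigs :: "real mat \<Rightarrow> real list" where
  "eigs A = (THE es. length es = dim_row A \<and> sorted_wrt (\<ge>) es \<and>
                     char_poly A = (\<Prod>e\<leftarrow>es. [:- e, 1:]))"

definition lam :: "real mat \<Rightarrow> nat \<Rightarrow> real" where
  "lam A j = eigs A ! (j - 1)"

definition laplacian :: "nat \<Rightarrow> (nat \<Rightarrow> nat \<Rightarrow> bool) \<Rightarrow> real mat" where
  "laplacian n E = mat n n (\<lambda>(i, j).
     if i = j then real (card {k. k < n \<and> k \<noteq> i \<and> E i k})
     else if E i j then -1 else 0)"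

text \<open>Adjacency of C_q1 (+) K_p (+) C_q2 on the integer vertex set
  {-q1-p+2, ..., q2-1}, exactly as in the paper.\<close>
definition ckc_adj :: "int \<Rightarrow> int \<Rightarrow> int \<Rightarrow> int \<Rightarrow> int \<Rightarrow> bool" where
  "ckc_adj p q1 q2 u v \<longleftrightarrow> u \<noteq> v \<and>
     ((-p+1 \<le> u \<and> u \<le> 0 \<and> -p+1 \<le> v \<and> v \<le> 0)
      \<or> {u, v} = {-p, -p+1}
      \<or> {u, v} = {0, 1}
      \<or> (\<bar>u - v\<bar> = 1 \<and> -q1-p+2 \<le> min u v \<and> min u v \<le> -p-1)
      \<or> (\<bar>u - v\<bar> = 1 \<and> 1 \<le> min u v \<and> min u v \<le> q2-2))"

definition ckc_laplacian :: "nat \<Rightarrow> nat \<Rightarrow> nat \<Rightarrow> real mat" where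
  "ckc_laplacian p q1 q2 = laplacian (p + q1 + q2 - 2)
     (\<lambda>i j. ckc_adj (int p) (int q1) (int q2)
              (int i - int (q1 + p - 2)) (int j - int (q1 + p - 2)))"

definition path_laplacian :: "nat \<Rightarrow> real mat" where
  "path_laplacian m = laplacian m (\<lambda>i j. i + 1 = j \<or> j + 1 = i)"

end

theory Submission
  imports Defs
begin

text \<open>After renaming vertices the graph is the path \<open>0, \<dots>, n - 1\<close> in which the \<open>p\<close> consecutive
  vertices \<open>K = {lo..hi}\<close> form a clique. Its Laplacian form splits into the clique part
  \<open>p \<Sum>\<^sub>K x\<^sub>i\<^sup>2 - (\<Sum>\<^sub>K x\<^sub>i)\<^sup>2\<close> plus the form of the remaining path edges, which equals
  \<open>2 \<Sum> deg(i) x\<^sub>i\<^sup>2\<close> minus the sum of \<open>(x\<^sub>i + x\<^sub>j)\<^sup>2\<close> over those edges; their degrees are at most 2,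
  at most 1 on \<open>K\<close> and 0 strictly inside \<open>K\<close>. Courant-Fischer with suitable test subspaces then
  gives \<open>\<lambda>\<^sub>p\<^sub>-\<^sub>1 \<ge> p\<close> (vectors on \<open>K\<close> with zero sum), \<open>\<lambda>\<^sub>3 \<le> p\<close> (vectors vanishing at both ends
  of \<open>K\<close>), \<open>\<lambda>\<^sub>1 \<le> p + 2\<close> (all vectors), \<open>\<lambda>\<^sub>p < 4\<close> (vectors constant on \<open>K\<close>) and
  \<open>\<lambda>\<^sub>n\<^sub>-\<^sub>1 > 0\<close> (connectivity). As the test vector \<open>e\<^sub>0 - e\<^sub>1\<close> gives \<open>\<lambda>\<^sub>1 \<ge> 5/2\<close> for a path
  on at least three vertices, the bound \<open>min (\<lambda>\<^sub>1(L\<^sub>C\<^sub>q) + 2) p\<close> exceeds 4.\<close>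

lemma real_symmetric_mat_complex_eigenvalue_real:
  fixes A :: "real mat"
  assumes A: "A \<in> carrier_mat n n" and sym: "transpose_mat A = A"
    and z: "z \<in> carrier_vec n" "z \<noteq> 0\<^sub>v n" "map_mat complex_of_real A *\<^sub>v z = a \<cdot>\<^sub>v z"
  shows "Im a = 0"
proof -
  have Az: "(\<Sum>j<n. complex_of_real (A $$ (i,j)) * z $ j) = a * z $ i" if i: "i < n" for i
  proof -
    have "(map_mat complex_of_real A *\<^sub>v z) $ i = (\<Sum>j<n. complex_of_real (A $$ (i,j)) * z $ j)"
      using i A z(1) by (auto simp: mult_mat_vec_def scalar_prod_def lessThan_atLeast0 intro!: sum.cong)
    then show ?thesis using z(3) i z(1) by simp
  qed
  define s where "s = (\<Sum>i<n. cnj (z $ i) * (\<Sum>j<n. complex_of_real (A $$ (i,j)) * z $ j))"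
  define N where "N = (\<Sum>i<n. (cmod (z $ i))\<^sup>2)"
  have s_eigen: "s = a * complex_of_real N"
  proof -
    have "s = (\<Sum>i<n. a * (cnj (z $ i) * z $ i))" unfolding s_def
      by (rule sum.cong, simp, subst Az, auto simp: algebra_simps)
    also have "\<dots> = a * (\<Sum>i<n. cnj (z $ i) * z $ i)" by (simp add: sum_distrib_left)
    also have "(\<Sum>i<n. cnj (z $ i) * z $ i) = complex_of_real N" unfolding N_def of_real_sum
      by (rule sum.cong, simp, insert complex_norm_square, force)
    finally show ?thesis .
  qed
  have symA: "A $$ (i,j) = A $$ (j,i)" if "i < n" "j < n" for i j
    using sym that A by (metis carrier_matD(1) carrier_matD(2) index_transpose_mat(1))
  have s_real: "cnj s = s"
  proof -
    have "cnj s = (\<Sum>i<n. \<Sum>j<n. z $ i * complex_of_real (A $$ (i,j)) * cnj (z $ j))"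
      unfolding s_def by (simp add: sum_distrib_left algebra_simps)
    also have "\<dots> = (\<Sum>j<n. \<Sum>i<n. z $ i * complex_of_real (A $$ (i,j)) * cnj (z $ j))"
      by (rule sum.swap)
    also have "\<dots> = s" unfolding s_def sum_distrib_left
      by (intro sum.cong refl, subst symA, auto simp: algebra_simps)
    finally show ?thesis .
  qed
  have N_pos: "N > 0"
  proof -
    obtain i where i: "i < n" "z $ i \<noteq> 0" using z by (metis carrier_vecD eq_vecI index_zero_vec)
    have "(cmod (z $ i))\<^sup>2 \<le> N" unfolding N_def by (rule member_le_sum) (use i in auto)
    moreover have "(cmod (z $ i))\<^sup>2 > 0" using i by simp
    ultimately show ?thesis by linarith
  qed
  have "Im a * N = 0" using arg_cong[OF s_real, of Im] s_eigen by simp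
  then show ?thesis using N_pos by simp
qed

lemma real_symmetric_mat_eigenvector:
  fixes A :: "real mat"
  assumes A: "A \<in> carrier_mat n n" and sym: "transpose_mat A = A" and n: "0 < n"
  obtains e v where "v \<in> carrier_vec n" "v \<noteq> 0\<^sub>v n" "A *\<^sub>v v = e \<cdot>\<^sub>v v"
proof -
  define Ac where "Ac = map_mat complex_of_real A"
  have Ac: "Ac \<in> carrier_mat n n" using A unfolding Ac_def by auto
  obtain as where as: "char_poly Ac = (\<Prod>a\<leftarrow>as. [:- a, 1:])" "length as = n"
    using char_poly_factorized[OF Ac] by blast
  then obtain a as' where "as = a # as'" using n by (cases as) auto
  then have "eigenvalue Ac a" using eigenvalue_root_char_poly[OF Ac] as(1) by simp
  then obtain z where "eigenvector Ac z a" unfolding eigenvalue_def by blast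
  then have z: "z \<in> carrier_vec n" "z \<noteq> 0\<^sub>v n" "Ac *\<^sub>v z = a \<cdot>\<^sub>v z"
    unfolding eigenvector_def using Ac by auto
  have a_real: "Im a = 0"
    using real_symmetric_mat_complex_eigenvalue_real[OF A sym z[unfolded Ac_def]] .
  define vr where "vr = vec n (\<lambda>i. Re (z $ i))"
  define vi where "vi = vec n (\<lambda>i. Im (z $ i))"
  have parts: "(\<Sum>j<n. A $$ (i,j) * f (z $ j)) = Re a * f (z $ i)"
    if i: "i < n" and f: "f = Re \<or> f = Im" for i f
  proof -
    have "(Ac *\<^sub>v z) $ i = (\<Sum>j<n. complex_of_real (A $$ (i,j)) * z $ j)"
      using i A z(1) unfolding Ac_def
      by (auto simp: mult_mat_vec_def scalar_prod_def lessThan_atLeast0 intro!: sum.cong)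
    then have "(\<Sum>j<n. complex_of_real (A $$ (i,j)) * z $ j) = a * z $ i" using z(3) i z(1) by simp
    from arg_cong[OF this, of f] show ?thesis using f a_real by (auto simp: Re_sum Im_sum)
  qed
  have "A *\<^sub>v vr = Re a \<cdot>\<^sub>v vr" "A *\<^sub>v vi = Re a \<cdot>\<^sub>v vi"
    using A parts by (auto intro!: eq_vecI simp: vr_def vi_def mult_mat_vec_def scalar_prod_def lessThan_atLeast0)
  moreover have "vr \<noteq> 0\<^sub>v n \<or> vi \<noteq> 0\<^sub>v n"
  proof (rule ccontr)
    assume "\<not> ?thesis"
    then have "Re (z $ i) = 0 \<and> Im (z $ i) = 0" if "i < n" for i
      using that by (metis vr_def vi_def index_vec index_zero_vec(1))
    then have "z = 0\<^sub>v n" using z(1) by (auto intro!: eq_vecI simp: complex_eq_iff)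
    then show False using z(2) by simp
  qed
  moreover have "vr \<in> carrier_vec n" "vi \<in> carrier_vec n" by (auto simp: vr_def vi_def)
  ultimately show ?thesis using that by blast
qed

definition householder :: "nat \<Rightarrow> real vec \<Rightarrow> real mat" where
  "householder n w = mat n n (\<lambda>(i,j). (if i = j then 1 else 0) - 2 / (w \<bullet> w) * w $ i * w $ j)"

lemma householder_dim [simp]: "dim_row (householder n w) = n" "dim_col (householder n w) = n"
  unfolding householder_def by simp_all

lemma householder_carrier [simp]: "householder n w \<in> carrier_mat n n"
  by (simp add: carrier_matI)

lemma householder_symmetric: "transpose_mat (householder n w) = householder n w"
  unfolding householder_def by (rule eq_matI) auto

lemma householder_involution:
  assumes w: "w \<in> carrier_vec n" "w \<noteq> 0\<^sub>v n"
  shows "householder n w * householder n w = 1\<^sub>m n"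
proof (rule eq_matI)
  fix i k assume "i < dim_row (1\<^sub>m n :: real mat)" and "k < dim_col (1\<^sub>m n :: real mat)"
  then have i: "i < n" and k: "k < n" by auto
  define c where "c = 2 / (w \<bullet> w)"
  define s where "s = (\<Sum>j<n. w $ j * w $ j)"
  have "s = w \<bullet> w" using w by (simp add: s_def scalar_prod_def lessThan_atLeast0)
  then have cs: "c * c * s = 2 * c"
    using conjugate_square_greater_0_vec[OF w(1)] w(2) by (simp add: c_def field_simps)
  have delta: "(\<Sum>j<n. (if l = j then 1 else 0) * f j) = (f l :: real)" if "l < n" for l f
    using that by (simp add: if_distrib[of "\<lambda>c. c * _"] cong: if_cong)
  have "(householder n w * householder n w) $$ (i,k)
      = (\<Sum>j<n. ((if i = j then 1 else 0) - c * w $ i * w $ j) * ((if j = k then 1 else 0) - c * w $ j * w $ k))"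
    using i k by (auto simp: householder_def c_def scalar_prod_def lessThan_atLeast0 intro!: sum.cong)
  also have "\<dots> = (\<Sum>j<n. (if i = j then 1 else 0) * (if k = j then 1 else 0)
      - c * w $ k * ((if i = j then 1 else 0) * w $ j) - c * w $ i * ((if k = j then 1 else 0) * w $ j)
      + c * c * w $ i * w $ k * (w $ j * w $ j))"
    by (rule sum.cong) (auto simp: algebra_simps)
  also have "\<dots> = (\<Sum>j<n. (if i = j then 1 else 0) * (if k = j then 1 else 0))
      - c * w $ k * (\<Sum>j<n. (if i = j then 1 else 0) * w $ j)
      - c * w $ i * (\<Sum>j<n. (if k = j then 1 else 0) * w $ j) + c * c * w $ i * w $ k * s"
    unfolding s_def by (simp only: sum.distrib sum_subtractf sum_distrib_left)
  also have "\<dots> = (if i = k then 1 else 0) - c * w $ k * w $ i - c * w $ i * w $ k + c * c * s * w $ i * w $ k"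
    using i k by (simp add: delta)
  also have "\<dots> = (if i = k then 1 else 0)"
    unfolding cs by (simp add: algebra_simps)
  finally show "(householder n w * householder n w) $$ (i,k) = 1\<^sub>m n $$ (i,k)" using i k by simp
qed (auto simp: householder_def)

lemma householder_unit_vec:
  assumes v: "v \<in> carrier_vec n" "v \<bullet> v = 1" "v \<noteq> unit_vec n 0" and n: "0 < n"
  shows "householder n (v - unit_vec n 0) *\<^sub>v unit_vec n 0 = v"
proof -
  define w where "w = v - unit_vec n 0"
  have w: "w \<in> carrier_vec n" using v by (simp add: w_def)
  have w_nth: "w $ i = v $ i - (if i = 0 then 1 else 0)" if "i < n" for i
    using that v by (auto simp: w_def)
  have "w \<noteq> 0\<^sub>v n"
  proof
    assume "w = 0\<^sub>v n"
    then have "v $ i = unit_vec n 0 $ i" if "i < n" for i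
      using arg_cong[OF \<open>w = 0\<^sub>v n\<close>, of "\<lambda>u. u $ i"] that w_nth by simp
    then show False using v(1,3) by (auto intro!: eq_vecI)
  qed
  then have ww_pos: "0 < w \<bullet> w" using conjugate_square_greater_0_vec[OF w] by simp
  have "w \<bullet> w = v \<bullet> v - 2 * v $ 0 + 1"
    using v(1) n by (simp add: w_def scalar_prod_minus_distrib minus_scalar_prod_distrib
        comm_scalar_prod[of "unit_vec n 0" n v])
  then have ww: "w \<bullet> w = 2 - 2 * v $ 0" using v(2) by simp
  have c: "2 / (w \<bullet> w) * w $ 0 = -1"
    using ww ww_pos w_nth[OF n] by (auto simp: field_simps)
  show ?thesis
  proof (rule eq_vecI)
    fix i assume "i < dim_vec v"
    then have i: "i < n" using v by auto
    have "(householder n w *\<^sub>v unit_vec n 0) $ i = householder n w $$ (i, 0)"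
      using i n by simp
    also have "\<dots> = (if i = 0 then 1 else 0) - (2 / (w \<bullet> w) * w $ 0) * w $ i"
      using i n by (simp add: householder_def)
    also have "\<dots> = v $ i" unfolding c using w_nth[OF i] by simp
    finally show "(householder n (v - unit_vec n 0) *\<^sub>v unit_vec n 0) $ i = v $ i" by (simp add: w_def)
  qed (use v in auto)
qed

lemma reflection_to_unit_vec:
  fixes v :: "real vec"
  assumes v: "v \<in> carrier_vec n" "v \<bullet> v = 1" and n: "0 < n"
  obtains H where "H \<in> carrier_mat n n" "transpose_mat H = H" "H * H = 1\<^sub>m n" "H *\<^sub>v unit_vec n 0 = v"
proof (cases "v = unit_vec n 0")
  case True
  then show ?thesis using that[of "1\<^sub>m n"] by auto
next
  case False
  have "v - unit_vec n 0 \<noteq> 0\<^sub>v n"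
  proof
    assume "v - unit_vec n 0 = 0\<^sub>v n"
    have "v $ i = unit_vec n 0 $ i" if "i < n" for i
      using arg_cong[OF \<open>v - unit_vec n 0 = 0\<^sub>v n\<close>, of "\<lambda>u. u $ i"] that v(1) by simp
    then show False using v(1) False by (auto intro!: eq_vecI)
  qed
  then show ?thesis
    using that householder_symmetric householder_involution householder_unit_vec[OF v False n] v(1)
    by (metis householder_carrier minus_carrier_vec unit_vec_carrier)
qed

lemma real_symmetric_mat_unit_eigenvector:
  fixes A :: "real mat"
  assumes A: "A \<in> carrier_mat n n" and sym: "transpose_mat A = A" and n: "0 < n"
  obtains e u where "u \<in> carrier_vec n" "u \<bullet> u = 1" "A *\<^sub>v u = e \<cdot>\<^sub>v u"
proof -
  obtain e v where v: "v \<in> carrier_vec n" "v \<noteq> 0\<^sub>v n" "A *\<^sub>v v = e \<cdot>\<^sub>v v"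
    using real_symmetric_mat_eigenvector[OF A sym n] by blast
  define u where "u = (1 / sqrt (v \<bullet> v)) \<cdot>\<^sub>v v"
  have vv_pos: "v \<bullet> v > 0" using conjugate_square_greater_0_vec[OF v(1)] v(2) by simp
  have "u \<bullet> u = (1 / sqrt (v \<bullet> v)) * (1 / sqrt (v \<bullet> v)) * (v \<bullet> v)"
    unfolding u_def using v(1) by (simp add: algebra_simps)
  then have "u \<bullet> u = 1" using vv_pos by (simp add: field_simps)
  moreover have "A *\<^sub>v u = e \<cdot>\<^sub>v u"
    unfolding u_def using mult_mat_vec[OF A v(1)] v(3) v(1) by (simp add: smult_smult_assoc mult.commute)
  moreover have "u \<in> carrier_vec n" using v unfolding u_def by simp
  ultimately show ?thesis using that by blast
qed

lemma similar_mat_wit_involution: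
  assumes A: "A \<in> carrier_mat n n" and H: "H \<in> carrier_mat n n" "H * H = 1\<^sub>m n"
  shows "similar_mat_wit A (H * A * H) H H"
proof (rule similar_mat_witI[OF H(2) H(2) _ A _ H(1) H(1)])
  have "H * (H * A * H) * H = (H * H) * A * (H * H)"
    using H(1) A by (simp add: assoc_mult_mat[of _ n n _ n _ n])
  then show "A = H * (H * A * H) * H" unfolding H(2) using A by simp
qed (use H A in auto)

text \<open>Conjugating by a reflection that sends \<open>e\<^sub>0\<close> to a unit eigenvector makes \<open>e\<^sub>0\<close> an eigenvector,
  and symmetry then clears the rest of the first row as well.\<close>
lemma real_symmetric_mat_deflation:
  fixes A :: "real mat"
  assumes A: "A \<in> carrier_mat (Suc m) (Suc m)" and sym: "transpose_mat A = A"
  obtains H B1 B4 where "H \<in> carrier_mat (Suc m) (Suc m)" "transpose_mat H = H" "H * H = 1\<^sub>m (Suc m)"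
    "B1 \<in> carrier_mat 1 1" "B4 \<in> carrier_mat m m" "transpose_mat B4 = B4"
    "H * A * H = four_block_mat B1 (0\<^sub>m 1 m) (0\<^sub>m m 1) B4"
proof -
  let ?n = "Suc m"
  obtain e u where u: "u \<in> carrier_vec ?n" and uu: "u \<bullet> u = 1" and Au: "A *\<^sub>v u = e \<cdot>\<^sub>v u"
    using real_symmetric_mat_unit_eigenvector[OF A sym] by blast
  obtain H where H: "H \<in> carrier_mat ?n ?n" "transpose_mat H = H" "H * H = 1\<^sub>m ?n" "H *\<^sub>v unit_vec ?n 0 = u"
    using reflection_to_unit_vec[OF u uu] by auto
  define A1 where "A1 = H * A * H"
  have A1: "A1 \<in> carrier_mat ?n ?n" unfolding A1_def using H A by auto
  have HA: "H * A \<in> carrier_mat ?n ?n" using H A by simp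
  have "transpose_mat A1 = transpose_mat H * (transpose_mat A * transpose_mat H)"
    unfolding A1_def transpose_mult[OF HA H(1)] transpose_mult[OF H(1) A] ..
  then have "transpose_mat A1 = A1" unfolding A1_def sym H(2) using H A by (simp add: assoc_mult_mat)
  then have A1_sym: "A1 $$ (i,j) = A1 $$ (j,i)" if "i < ?n" "j < ?n" for i j
    using that A1 by (metis carrier_matD(1) carrier_matD(2) index_transpose_mat(1))
  have "H *\<^sub>v u = (H * H) *\<^sub>v unit_vec ?n 0"
    unfolding H(4)[symmetric] by (rule assoc_mult_mat_vec[symmetric]) (use H in auto)
  then have Hu: "H *\<^sub>v u = unit_vec ?n 0" unfolding H(3) by simp
  have "A1 *\<^sub>v unit_vec ?n 0 = (H * A) *\<^sub>v (H *\<^sub>v unit_vec ?n 0)"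
    unfolding A1_def by (rule assoc_mult_mat_vec) (use H A in auto)
  also have "\<dots> = H *\<^sub>v (A *\<^sub>v u)"
    unfolding H(4) by (rule assoc_mult_mat_vec) (use H A u in auto)
  also have "\<dots> = e \<cdot>\<^sub>v unit_vec ?n 0" unfolding Au mult_mat_vec[OF H(1) u] Hu ..
  finally have col0: "A1 *\<^sub>v unit_vec ?n 0 = e \<cdot>\<^sub>v unit_vec ?n 0" .
  have A1_col0: "A1 $$ (i, 0) = (if i = 0 then e else 0)" if "i < ?n" for i
  proof -
    have "A1 $$ (i, 0) = (A1 *\<^sub>v unit_vec ?n 0) $ i" using A1 that by simp
    then show ?thesis unfolding col0 using that by simp
  qed
  obtain B1 B2 B3 B4 where sb: "split_block A1 1 1 = (B1, B2, B3, B4)"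
    by (cases "split_block A1 1 1") auto
  have "B2 = 0\<^sub>m 1 m" "B3 = 0\<^sub>m m 1"
    using sb A1 A1_col0 A1_sym[of 0] unfolding split_block_def Let_def by (auto intro!: eq_matI)
  moreover have "transpose_mat B4 = B4"
    using sb A1 A1_sym unfolding split_block_def Let_def by (auto intro!: eq_matI)
  moreover have "A1 = four_block_mat B1 B2 B3 B4" "B1 \<in> carrier_mat 1 1" "B4 \<in> carrier_mat m m"
    using split_block[OF sb, of m m] A1 by auto
  ultimately show ?thesis using that H unfolding A1_def by auto
qed

theorem real_symmetric_mat_diagonalizable:
  fixes A :: "real mat"
  assumes "A \<in> carrier_mat n n" "transpose_mat A = A"
  shows "\<exists>P D. similar_mat_wit A D P (transpose_mat P) \<and> diagonal_mat D"
  using assms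
proof (induction n arbitrary: A)
  case 0
  then have "similar_mat_wit A A (1\<^sub>m 0) (transpose_mat (1\<^sub>m 0))"
    using similar_mat_wit_refl by simp
  moreover have "diagonal_mat A" using "0.prems" by (auto simp: diagonal_mat_def)
  ultimately show ?case by blast
next
  case (Suc m A)
  let ?n = "Suc m"
  have A: "A \<in> carrier_mat ?n ?n" using Suc.prems by auto
  obtain H B1 B4 where H: "H \<in> carrier_mat ?n ?n" "transpose_mat H = H" "H * H = 1\<^sub>m ?n"
    and B: "B1 \<in> carrier_mat 1 1" "B4 \<in> carrier_mat m m" "transpose_mat B4 = B4"
    and HAH: "H * A * H = four_block_mat B1 (0\<^sub>m 1 m) (0\<^sub>m m 1) B4"
    using real_symmetric_mat_deflation[OF A] Suc.prems by metis
  obtain P' D' where IH: "similar_mat_wit B4 D' P' (transpose_mat P')" "diagonal_mat D'"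
    using Suc.IH[OF B(2,3)] by blast
  have P': "P' \<in> carrier_mat m m" and D': "D' \<in> carrier_mat m m"
    using similar_mat_witD2[OF B(2) IH(1)] by auto
  define P1 where "P1 = four_block_mat (1\<^sub>m 1) (0\<^sub>m 1 m) (0\<^sub>m m 1) P'"
  define D1 where "D1 = four_block_mat B1 (0\<^sub>m 1 m) (0\<^sub>m m 1) D'"
  have P1: "P1 \<in> carrier_mat ?n ?n"
    unfolding P1_def using four_block_carrier_mat[OF one_carrier_mat[of 1] P'] by simp
  have P1T: "transpose_mat P1 = four_block_mat (1\<^sub>m 1) (0\<^sub>m 1 m) (0\<^sub>m m 1) (transpose_mat P')"
    unfolding P1_def using P' by (subst transpose_four_block_mat) auto
  have "similar_mat_wit (H * A * H) D1 P1 (transpose_mat P1)"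
    unfolding HAH D1_def P1T unfolding P1_def
    by (rule similar_mat_wit_four_block[OF similar_mat_wit_refl[OF B(1)] IH(1)]) (use P' B in auto)
  moreover have "similar_mat_wit A (H * A * H) H H" by (rule similar_mat_wit_involution[OF A H(1,3)])
  ultimately have "similar_mat_wit A D1 (H * P1) (transpose_mat P1 * H)"
    by (rule similar_mat_wit_trans[rotated])
  moreover have "transpose_mat (H * P1) = transpose_mat P1 * H"
    using transpose_mult[OF H(1) P1] H(2) by simp
  moreover have "diagonal_mat D1"
    unfolding D1_def using IH(2) B(1) D' by (auto simp: diagonal_mat_def)
  ultimately show ?case by metis
qed

lemma mset_eq_if_linear_factors_eq:
  fixes xs ys :: "real list"
  assumes "(\<Prod>e\<leftarrow>xs. [:- e, 1:]) = (\<Prod>e\<leftarrow>ys. [:- e, 1:])"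
  shows "mset xs = mset ys"
  using assms
proof (induction xs arbitrary: ys)
  case Nil
  moreover have "degree (\<Prod>e\<leftarrow>ys. [:- e, 1:]) = length ys" by (rule degree_linear_factors)
  ultimately have "length ys = 0" by simp
  then show ?case by simp
next
  case (Cons x xs ys)
  have "poly (\<Prod>e\<leftarrow>ys. [:- e, 1:]) x = 0" unfolding Cons.prems[symmetric] by simp
  then have x: "x \<in> set ys" by (auto simp: poly_prod_list prod_list_zero_iff)
  then have "[:- x, 1:] * (\<Prod>e\<leftarrow>xs. [:- e, 1:]) = [:- x, 1:] * (\<Prod>e\<leftarrow>remove1 x ys. [:- e, 1:])"
    using Cons.prems prod_list_map_remove1[OF x, of "\<lambda>e. [:- e, 1:]"] by simp
  then have "(\<Prod>e\<leftarrow>xs. [:- e, 1:]) = (\<Prod>e\<leftarrow>remove1 x ys. [:- e, 1:])"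
    by (subst (asm) mult_left_cancel) auto
  from Cons.IH[OF this] show ?case using x by simp
qed

lemma eigs_eqI:
  assumes "char_poly A = (\<Prod>e\<leftarrow>es. [:- e, 1:])" and "length es = dim_row A"
    and "sorted_wrt (\<ge>) es"
  shows "eigs A = es"
  unfolding eigs_def
proof (rule the_equality)
  fix es' assume "length es' = dim_row A \<and> sorted_wrt (\<ge>) es' \<and> char_poly A = (\<Prod>e\<leftarrow>es'. [:- e, 1:])"
  then have "sorted (rev es')" "mset (rev es') = mset (rev es)"
    using assms mset_eq_if_linear_factors_eq[of es' es] by (auto simp: sorted_wrt_rev)
  moreover have "sorted (rev es)" using assms(3) by (simp add: sorted_wrt_rev)
  ultimately have "sort (rev es) = rev es'" "sort (rev es) = rev es"
    by (auto intro: properties_for_sort)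
  then show "es' = es" by simp
qed (use assms in auto)

lemma eigs_similar_diagonal:
  fixes A :: "real mat"
  assumes A: "A \<in> carrier_mat n n" and sim: "similar_mat_wit A D P Q" and diag: "diagonal_mat D"
  shows "eigs A = rev (sort (map (\<lambda>i. D $$ (i,i)) [0..<n]))"
proof (rule eigs_eqI)
  have D: "D \<in> carrier_mat n n" using similar_mat_witD2[OF A sim] by auto
  have "char_poly A = char_poly D"
    by (rule char_poly_similar) (use sim in \<open>auto simp: similar_mat_def\<close>)
  also have "\<dots> = (\<Prod>a\<leftarrow>diag_mat D. [:- a, 1:])"
    by (rule char_poly_upper_triangular[OF D]) (use diag D in \<open>auto simp: diagonal_mat_def upper_triangular_def\<close>)
  also have "diag_mat D = map (\<lambda>i. D $$ (i,i)) [0..<n]" unfolding diag_mat_def using D by simp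
  finally have "char_poly A = (\<Prod>e\<leftarrow>map (\<lambda>i. D $$ (i,i)) [0..<n]. [:- e, 1:])" .
  moreover have "mset (map (\<lambda>i. D $$ (i,i)) [0..<n]) = mset (rev (sort (map (\<lambda>i. D $$ (i,i)) [0..<n])))"
    by simp
  moreover have "prod_list (map f xs) = prod_list (map f ys)" if "mset xs = mset ys"
    for f :: "real \<Rightarrow> real poly" and xs ys
    by (metis mset_map prod_mset_prod_list that)
  ultimately show "char_poly A = (\<Prod>e\<leftarrow>rev (sort (map (\<lambda>i. D $$ (i,i)) [0..<n])). [:- e, 1:])"
    by metis
qed (use A in \<open>auto simp: sorted_wrt_rev\<close>)

lemma orthogonal_diagonal_quadratic_form:
  fixes A :: "real mat"
  assumes P: "P \<in> carrier_mat n n" "P * transpose_mat P = 1\<^sub>m n" and D: "D \<in> carrier_mat n n"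
    and diag: "diagonal_mat D" and A: "A = P * D * transpose_mat P" and x: "x \<in> carrier_vec n"
  defines "y \<equiv> transpose_mat P *\<^sub>v x"
  shows "x \<bullet> (A *\<^sub>v x) = (\<Sum>i<n. D $$ (i,i) * (y $ i)\<^sup>2)" and "x \<bullet> x = (\<Sum>i<n. (y $ i)\<^sup>2)"
proof -
  have y: "y \<in> carrier_vec n" unfolding y_def using P x by simp
  have "A *\<^sub>v x = (P * D) *\<^sub>v y"
    unfolding A y_def by (rule assoc_mult_mat_vec) (use P D x in auto)
  also have "\<dots> = P *\<^sub>v (D *\<^sub>v y)" by (rule assoc_mult_mat_vec) (use P D y in auto)
  finally have "x \<bullet> (A *\<^sub>v x) = y \<bullet> (D *\<^sub>v y)"
    unfolding y_def by (metis transpose_vec_mult_scalar P(1) D mult_mat_vec_carrier x y y_def)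
  moreover have "(D *\<^sub>v y) $ i = D $$ (i,i) * y $ i" if i: "i < n" for i
  proof -
    have "(D *\<^sub>v y) $ i = (\<Sum>j<n. D $$ (i,j) * y $ j)"
      using D y i by (auto simp: mult_mat_vec_def scalar_prod_def lessThan_atLeast0 intro!: sum.cong)
    also have "\<dots> = (\<Sum>j<n. if i = j then D $$ (i,i) * y $ j else 0)"
      by (rule sum.cong) (use diag D i in \<open>auto simp: diagonal_mat_def\<close>)
    finally show ?thesis using i by simp
  qed
  ultimately show "x \<bullet> (A *\<^sub>v x) = (\<Sum>i<n. D $$ (i,i) * (y $ i)\<^sup>2)"
    using y D by (auto simp: scalar_prod_def lessThan_atLeast0 power2_eq_square intro!: sum.cong)
  have "x = (P * transpose_mat P) *\<^sub>v x" unfolding P(2) using x by simp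
  then have "x = P *\<^sub>v y" unfolding y_def using P x by (metis assoc_mult_mat_vec carrier_matD transpose_carrier_mat)
  then have "x \<bullet> x = y \<bullet> y"
    by (metis transpose_vec_mult_scalar P(1) x y y_def)
  then show "x \<bullet> x = (\<Sum>i<n. (y $ i)\<^sup>2)"
    using y by (auto simp: scalar_prod_def lessThan_atLeast0 power2_eq_square)
qed

lemma real_symmetric_mat_spectral_coordinates:
  fixes A :: "real mat"
  assumes A: "A \<in> carrier_mat n n" and sym: "transpose_mat A = A"
  obtains P d where "P \<in> carrier_mat n n"
    and "\<And>x. x \<in> carrier_vec n \<Longrightarrow> x \<bullet> (A *\<^sub>v x) = (\<Sum>i<n. d i * ((transpose_mat P *\<^sub>v x) $ i)\<^sup>2)"
    and "\<And>x. x \<in> carrier_vec n \<Longrightarrow> x \<bullet> x = (\<Sum>i<n. ((transpose_mat P *\<^sub>v x) $ i)\<^sup>2)"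
    and "eigs A = rev (sort (map d [0..<n]))"
proof -
  obtain P D where sim: "similar_mat_wit A D P (transpose_mat P)" and diag: "diagonal_mat D"
    using real_symmetric_mat_diagonalizable[OF A sym] by blast
  from similar_mat_witD2[OF A sim] have "P \<in> carrier_mat n n" "D \<in> carrier_mat n n"
    "P * transpose_mat P = 1\<^sub>m n" "A = P * D * transpose_mat P" by auto
  with orthogonal_diagonal_quadratic_form[OF _ _ _ diag] eigs_similar_diagonal[OF A sim diag]
  show ?thesis using that[of P "\<lambda>i. D $$ (i,i)"] by blast
qed

lemma exists_nonzero_orthogonal:
  fixes gs :: "real vec list"
  assumes gs: "set gs \<subseteq> carrier_vec n" and len: "length gs < n"
  obtains x where "x \<in> carrier_vec n" "x \<noteq> 0\<^sub>v n" "\<forall>g\<in>set gs. g \<bullet> x = 0"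
proof -
  define c where "c i = (if i < length gs then gs ! i else 0\<^sub>v n)" for i
  define M where "M = mat\<^sub>r n n (\<lambda>i. if i = n - 1 then 0\<^sub>v n else c i)"
  have "c \<in> {0..<n} \<rightarrow> carrier_vec n" using gs nth_mem unfolding c_def by fastforce
  then have "det M = 0" unfolding M_def by (rule det_row_0[rotated]) (use len in auto)
  moreover have M: "M \<in> carrier_mat n n" unfolding M_def by simp
  ultimately obtain x where x: "x \<in> carrier_vec n" "x \<noteq> 0\<^sub>v n" "M *\<^sub>v x = 0\<^sub>v n"
    using det_0_iff_vec_prod_zero[OF M] by blast
  have "g \<bullet> x = 0" if "g \<in> set gs" for g
  proof -
    obtain i where i: "i < length gs" "g = gs ! i" using \<open>g \<in> set gs\<close> by (auto simp: in_set_conv_nth)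
    have "g \<in> carrier_vec n" using gs \<open>g \<in> set gs\<close> by auto
    then have "row M i = g" unfolding M_def using len i by (subst row_mat_of_row_fun) (auto simp: c_def)
    then show "g \<bullet> x = 0" using arg_cong[OF x(3), of "\<lambda>v. v $ i"] M len i by simp
  qed
  then show ?thesis using that x by blast
qed

text \<open>The heart of the min-max principle: a vector orthogonal both to \<open>fs\<close> and to the
  eigenvectors indexed by \<open>T\<close> has its Rayleigh quotient spread over the remaining eigenvalues.\<close>
lemma spectral_test_vector:
  fixes A :: "real mat"
  assumes A: "A \<in> carrier_mat n n" and sym: "transpose_mat A = A"
  obtains d where "eigs A = rev (sort (map d [0..<n]))"
    and "\<And>fs T. set (fs :: real vec list) \<subseteq> carrier_vec n \<Longrightarrow> T \<subseteq> {..<n} \<Longrightarrow> length fs + card T < n \<Longrightarrow>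
      \<exists>x y. x \<in> carrier_vec n \<and> x \<noteq> 0\<^sub>v n \<and> (\<forall>f\<in>set fs. f \<bullet> x = 0) \<and>
        x \<bullet> (A *\<^sub>v x) = (\<Sum>i\<in>{..<n} - T. d i * (y i)\<^sup>2) \<and> x \<bullet> x = (\<Sum>i\<in>{..<n} - T. (y i)\<^sup>2) \<and>
        (\<exists>i\<in>{..<n} - T. y i \<noteq> 0)"
proof -
  obtain P d where P: "P \<in> carrier_mat n n"
    and form: "\<And>x. x \<in> carrier_vec n \<Longrightarrow> x \<bullet> (A *\<^sub>v x) = (\<Sum>i<n. d i * ((transpose_mat P *\<^sub>v x) $ i)\<^sup>2)"
    and norm: "\<And>x. x \<in> carrier_vec n \<Longrightarrow> x \<bullet> x = (\<Sum>i<n. ((transpose_mat P *\<^sub>v x) $ i)\<^sup>2)"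
    and eigs: "eigs A = rev (sort (map d [0..<n]))"
    using real_symmetric_mat_spectral_coordinates[OF A sym] by blast
  show ?thesis
  proof (rule that[OF eigs])
    fix fs :: "real vec list" and T assume fs: "set fs \<subseteq> carrier_vec n" and T: "T \<subseteq> {..<n}" and len: "length fs + card T < n"
    have fin: "finite T" using T finite_subset by blast
    define gs where "gs = fs @ map (col P) (sorted_list_of_set T)"
    have "set gs \<subseteq> carrier_vec n" using fs P fin unfolding gs_def by auto
    moreover have "length gs < n" using len fin unfolding gs_def by simp
    ultimately obtain x where x: "x \<in> carrier_vec n" "x \<noteq> 0\<^sub>v n" and orth: "\<forall>g\<in>set gs. g \<bullet> x = 0"
      by (rule exists_nonzero_orthogonal)
    define y where "y i = (transpose_mat P *\<^sub>v x) $ i" for i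
    have y_T: "y i = 0" if "i \<in> T" for i
    proof -
      have "col P i \<in> set gs" using that fin unfolding gs_def by simp
      then have "col P i \<bullet> x = 0" using orth by blast
      then show ?thesis using that T P unfolding y_def by auto
    qed
    have split: "(\<Sum>i<n. f i * (y i)\<^sup>2) = (\<Sum>i\<in>{..<n} - T. f i * (y i)\<^sup>2)" for f
      by (rule sum.mono_neutral_right) (use y_T in auto)
    have "x \<bullet> (A *\<^sub>v x) = (\<Sum>i\<in>{..<n} - T. d i * (y i)\<^sup>2)"
      using form[OF x(1)] split[of d] unfolding y_def by simp
    moreover have xx: "x \<bullet> x = (\<Sum>i\<in>{..<n} - T. (y i)\<^sup>2)"
      using norm[OF x(1)] split[of "\<lambda>_. 1"] unfolding y_def by simp
    moreover have "\<exists>i\<in>{..<n} - T. y i \<noteq> 0"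
    proof (rule ccontr)
      assume "\<not> ?thesis"
      then have "x \<bullet> x = 0" unfolding xx by simp
      then show False using conjugate_square_greater_0_vec[OF x(1)] x(2) by simp
    qed
    ultimately show "\<exists>x y. x \<in> carrier_vec n \<and> x \<noteq> 0\<^sub>v n \<and> (\<forall>f\<in>set fs. f \<bullet> x = 0) \<and>
        x \<bullet> (A *\<^sub>v x) = (\<Sum>i\<in>{..<n} - T. d i * (y i)\<^sup>2) \<and> x \<bullet> x = (\<Sum>i\<in>{..<n} - T. (y i)\<^sup>2) \<and>
        (\<exists>i\<in>{..<n} - T. y i \<noteq> 0)"
      using x orth unfolding gs_def by auto
  qed
qed

lemma card_nth_rev_sort:
  fixes d :: "nat \<Rightarrow> real"
  shows "card {j. j < n \<and> Q (rev (sort (map d [0..<n])) ! j)} = card {i. i < n \<and> Q (d i)}"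
proof -
  let ?ds = "map d [0..<n]"
  have "card {j. j < n \<and> Q (rev (sort ?ds) ! j)} = length (filter Q (rev (sort ?ds)))"
    by (simp add: length_filter_conv_card)
  also have "\<dots> = length (filter Q ?ds)" by (metis mset_filter mset_rev mset_sort size_mset)
  also have "\<dots> = card {i. i < n \<and> Q (?ds ! i)}" by (simp add: length_filter_conv_card)
  also have "\<dots> = card {i. i < n \<and> Q (d i)}" by (rule arg_cong[where f = card]) auto
  finally show ?thesis .
qed

lemma lam_if_card_ge:
  assumes eigs: "eigs A = rev (sort (map d [0..<n]))" and up: "\<And>a b. Q a \<Longrightarrow> a \<le> b \<Longrightarrow> Q b"
    and k: "0 < k" "k \<le> card {i. i < n \<and> Q (d i)}"
  shows "Q (lam A k)"
proof (rule ccontr)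
  assume not_Q: "\<not> Q (lam A k)"
  have sorted: "sorted (rev (eigs A))" and len: "length (eigs A) = n" unfolding eigs by simp_all
  have "{j. j < n \<and> Q (eigs A ! j)} \<subseteq> {..<k - 1}"
  proof
    fix j assume j: "j \<in> {j. j < n \<and> Q (eigs A ! j)}"
    show "j \<in> {..<k - 1}"
    proof (rule ccontr)
      assume "j \<notin> {..<k - 1}"
      then have "eigs A ! j \<le> lam A k" using sorted_rev_nth_mono[OF sorted] j len by (simp add: lam_def)
      then show False using up j not_Q by blast
    qed
  qed
  then have "card {j. j < n \<and> Q (eigs A ! j)} \<le> k - 1" by (metis card_lessThan card_mono finite_lessThan)
  then show False using k card_nth_rev_sort[of n Q d] unfolding eigs by linarith
qed

lemma not_lam_if_card_le:
  assumes eigs: "eigs A = rev (sort (map d [0..<n]))" and up: "\<And>a b. Q a \<Longrightarrow> a \<le> b \<Longrightarrow> Q b"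
    and r: "r < n" "card {i. i < n \<and> Q (d i)} \<le> r"
  shows "\<not> Q (lam A (r + 1))"
proof
  assume Q: "Q (lam A (r + 1))"
  have sorted: "sorted (rev (eigs A))" and len: "length (eigs A) = n" unfolding eigs by simp_all
  have "{..r} \<subseteq> {j. j < n \<and> Q (eigs A ! j)}"
  proof
    fix j assume "j \<in> {..r}"
    then have "lam A (r + 1) \<le> eigs A ! j" "j < n"
      using sorted_rev_nth_mono[OF sorted] r len by (auto simp: lam_def)
    then show "j \<in> {j. j < n \<and> Q (eigs A ! j)}" using up[OF Q] by blast
  qed
  then have "card {..r} \<le> card {j. j < n \<and> Q (eigs A ! j)}" by (rule card_mono[rotated]) auto
  then show False using r card_nth_rev_sort[of n Q d] unfolding eigs by simp
qed

lemma courant_fischer_lower: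
  fixes A :: "real mat"
  assumes A: "A \<in> carrier_mat n n" "transpose_mat A = A" and fs: "set fs \<subseteq> carrier_vec n"
    and k: "0 < k" "k + length fs \<le> n"
    and form: "\<And>x. x \<in> carrier_vec n \<Longrightarrow> \<forall>f\<in>set fs. f \<bullet> x = 0 \<Longrightarrow> c * (x \<bullet> x) \<le> x \<bullet> (A *\<^sub>v x)"
  shows "c \<le> lam A k"
proof -
  obtain d where eigs: "eigs A = rev (sort (map d [0..<n]))" and test: "\<And>fs T. set fs \<subseteq> carrier_vec n \<Longrightarrow>
      T \<subseteq> {..<n} \<Longrightarrow> length fs + card T < n \<Longrightarrow> \<exists>x y. x \<in> carrier_vec n \<and> x \<noteq> 0\<^sub>v n \<and>
        (\<forall>f\<in>set fs. f \<bullet> x = 0) \<and> x \<bullet> (A *\<^sub>v x) = (\<Sum>i\<in>{..<n} - T. d i * (y i)\<^sup>2) \<and>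
        x \<bullet> x = (\<Sum>i\<in>{..<n} - T. (y i)\<^sup>2) \<and> (\<exists>i\<in>{..<n} - T. y i \<noteq> 0)"
    using spectral_test_vector[OF A] by blast
  define T where "T = {i. i < n \<and> c \<le> d i}"
  have "k \<le> card T"
  proof (rule ccontr)
    assume "\<not> k \<le> card T"
    then obtain x y where x: "x \<in> carrier_vec n" "\<forall>f\<in>set fs. f \<bullet> x = 0"
      and q: "x \<bullet> (A *\<^sub>v x) = (\<Sum>i\<in>{..<n} - T. d i * (y i)\<^sup>2)" "x \<bullet> x = (\<Sum>i\<in>{..<n} - T. (y i)\<^sup>2)"
      and y: "\<exists>i\<in>{..<n} - T. y i \<noteq> 0"
      using test[OF fs, of T] k by (auto simp: T_def)
    have "(\<Sum>i\<in>{..<n} - T. d i * (y i)\<^sup>2) < (\<Sum>i\<in>{..<n} - T. c * (y i)\<^sup>2)"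
    proof (rule sum_strict_mono_ex1)
      show "\<forall>i\<in>{..<n} - T. d i * (y i)\<^sup>2 \<le> c * (y i)\<^sup>2" by (auto simp: T_def intro: mult_right_mono)
      from y obtain i where i: "i \<in> {..<n} - T" "y i \<noteq> 0" by blast
      then have "d i < c" "0 < (y i)\<^sup>2" by (auto simp: T_def)
      then show "\<exists>i\<in>{..<n} - T. d i * (y i)\<^sup>2 < c * (y i)\<^sup>2"
        using i(1) mult_strict_right_mono by blast
    qed simp
    then show False using form[OF x] q by (simp add: sum_distrib_left)
  qed
  then show ?thesis using lam_if_card_ge[OF eigs, of "\<lambda>e. c \<le> e"] k by (simp add: T_def)
qed

lemma courant_fischer_lower_strict:
  fixes A :: "real mat"
  assumes A: "A \<in> carrier_mat n n" "transpose_mat A = A" and fs: "set fs \<subseteq> carrier_vec n"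
    and k: "0 < k" "k + length fs \<le> n"
    and form: "\<And>x. x \<in> carrier_vec n \<Longrightarrow> x \<noteq> 0\<^sub>v n \<Longrightarrow> \<forall>f\<in>set fs. f \<bullet> x = 0 \<Longrightarrow>
      c * (x \<bullet> x) < x \<bullet> (A *\<^sub>v x)"
  shows "c < lam A k"
proof -
  obtain d where eigs: "eigs A = rev (sort (map d [0..<n]))" and test: "\<And>fs T. set fs \<subseteq> carrier_vec n \<Longrightarrow>
      T \<subseteq> {..<n} \<Longrightarrow> length fs + card T < n \<Longrightarrow> \<exists>x y. x \<in> carrier_vec n \<and> x \<noteq> 0\<^sub>v n \<and>
        (\<forall>f\<in>set fs. f \<bullet> x = 0) \<and> x \<bullet> (A *\<^sub>v x) = (\<Sum>i\<in>{..<n} - T. d i * (y i)\<^sup>2) \<and>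
        x \<bullet> x = (\<Sum>i\<in>{..<n} - T. (y i)\<^sup>2) \<and> (\<exists>i\<in>{..<n} - T. y i \<noteq> 0)"
    using spectral_test_vector[OF A] by blast
  define T where "T = {i. i < n \<and> c < d i}"
  have "k \<le> card T"
  proof (rule ccontr)
    assume "\<not> k \<le> card T"
    then obtain x y where x: "x \<in> carrier_vec n" "x \<noteq> 0\<^sub>v n" "\<forall>f\<in>set fs. f \<bullet> x = 0"
      and q: "x \<bullet> (A *\<^sub>v x) = (\<Sum>i\<in>{..<n} - T. d i * (y i)\<^sup>2)" "x \<bullet> x = (\<Sum>i\<in>{..<n} - T. (y i)\<^sup>2)"
      using test[OF fs, of T] k by (auto simp: T_def)
    have "(\<Sum>i\<in>{..<n} - T. d i * (y i)\<^sup>2) \<le> (\<Sum>i\<in>{..<n} - T. c * (y i)\<^sup>2)"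
      by (rule sum_mono) (auto simp: T_def intro: mult_right_mono)
    then show False using form[OF x] q by (simp add: sum_distrib_left)
  qed
  then show ?thesis using lam_if_card_ge[OF eigs, of "\<lambda>e. c < e"] k by (simp add: T_def)
qed

lemma courant_fischer_upper:
  fixes A :: "real mat"
  assumes A: "A \<in> carrier_mat n n" "transpose_mat A = A" and fs: "set fs \<subseteq> carrier_vec n"
    and r: "length fs < n"
    and form: "\<And>x. x \<in> carrier_vec n \<Longrightarrow> \<forall>f\<in>set fs. f \<bullet> x = 0 \<Longrightarrow> x \<bullet> (A *\<^sub>v x) \<le> c * (x \<bullet> x)"
  shows "lam A (length fs + 1) \<le> c"
proof -
  obtain d where eigs: "eigs A = rev (sort (map d [0..<n]))" and test: "\<And>fs T. set fs \<subseteq> carrier_vec n \<Longrightarrow>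
      T \<subseteq> {..<n} \<Longrightarrow> length fs + card T < n \<Longrightarrow> \<exists>x y. x \<in> carrier_vec n \<and> x \<noteq> 0\<^sub>v n \<and>
        (\<forall>f\<in>set fs. f \<bullet> x = 0) \<and> x \<bullet> (A *\<^sub>v x) = (\<Sum>i\<in>{..<n} - T. d i * (y i)\<^sup>2) \<and>
        x \<bullet> x = (\<Sum>i\<in>{..<n} - T. (y i)\<^sup>2) \<and> (\<exists>i\<in>{..<n} - T. y i \<noteq> 0)"
    using spectral_test_vector[OF A] by blast
  define S where "S = {i. i < n \<and> c < d i}"
  define T where "T = {i. i < n \<and> d i \<le> c}"
  have "card S + card T = card (S \<union> T)" by (rule card_Un_disjoint[symmetric]) (auto simp: S_def T_def)
  also have "S \<union> T = {..<n}" by (auto simp: S_def T_def)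
  finally have "card S + card T = n" by simp
  have "card S \<le> length fs"
  proof (rule ccontr)
    assume "\<not> card S \<le> length fs"
    then obtain x y where x: "x \<in> carrier_vec n" "\<forall>f\<in>set fs. f \<bullet> x = 0"
      and q: "x \<bullet> (A *\<^sub>v x) = (\<Sum>i\<in>{..<n} - T. d i * (y i)\<^sup>2)" "x \<bullet> x = (\<Sum>i\<in>{..<n} - T. (y i)\<^sup>2)"
      and y: "\<exists>i\<in>{..<n} - T. y i \<noteq> 0"
      using test[OF fs, of T] \<open>card S + card T = n\<close> by (auto simp: T_def)
    have "(\<Sum>i\<in>{..<n} - T. c * (y i)\<^sup>2) < (\<Sum>i\<in>{..<n} - T. d i * (y i)\<^sup>2)"
    proof (rule sum_strict_mono_ex1)
      show "\<forall>i\<in>{..<n} - T. c * (y i)\<^sup>2 \<le> d i * (y i)\<^sup>2" by (auto simp: T_def intro: mult_right_mono)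
      from y obtain i where i: "i \<in> {..<n} - T" "y i \<noteq> 0" by blast
      then have "c < d i" "0 < (y i)\<^sup>2" by (auto simp: T_def)
      then show "\<exists>i\<in>{..<n} - T. c * (y i)\<^sup>2 < d i * (y i)\<^sup>2"
        using i(1) mult_strict_right_mono by blast
    qed simp
    then show False using form[OF x] q by (simp add: sum_distrib_left)
  qed
  then have "\<not> c < lam A (length fs + 1)"
    by (intro not_lam_if_card_le[OF eigs]) (use r in \<open>auto simp: S_def\<close>)
  then show ?thesis by simp
qed

lemma courant_fischer_upper_strict:
  fixes A :: "real mat"
  assumes A: "A \<in> carrier_mat n n" "transpose_mat A = A" and fs: "set fs \<subseteq> carrier_vec n"
    and r: "length fs < n"
    and form: "\<And>x. x \<in> carrier_vec n \<Longrightarrow> x \<noteq> 0\<^sub>v n \<Longrightarrow> \<forall>f\<in>set fs. f \<bullet> x = 0 \<Longrightarrow>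
      x \<bullet> (A *\<^sub>v x) < c * (x \<bullet> x)"
  shows "lam A (length fs + 1) < c"
proof -
  obtain d where eigs: "eigs A = rev (sort (map d [0..<n]))" and test: "\<And>fs T. set fs \<subseteq> carrier_vec n \<Longrightarrow>
      T \<subseteq> {..<n} \<Longrightarrow> length fs + card T < n \<Longrightarrow> \<exists>x y. x \<in> carrier_vec n \<and> x \<noteq> 0\<^sub>v n \<and>
        (\<forall>f\<in>set fs. f \<bullet> x = 0) \<and> x \<bullet> (A *\<^sub>v x) = (\<Sum>i\<in>{..<n} - T. d i * (y i)\<^sup>2) \<and>
        x \<bullet> x = (\<Sum>i\<in>{..<n} - T. (y i)\<^sup>2) \<and> (\<exists>i\<in>{..<n} - T. y i \<noteq> 0)"
    using spectral_test_vector[OF A] by blast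
  define S where "S = {i. i < n \<and> c \<le> d i}"
  define T where "T = {i. i < n \<and> d i < c}"
  have "card S + card T = card (S \<union> T)" by (rule card_Un_disjoint[symmetric]) (auto simp: S_def T_def)
  also have "S \<union> T = {..<n}" by (auto simp: S_def T_def)
  finally have "card S + card T = n" by simp
  have "card S \<le> length fs"
  proof (rule ccontr)
    assume "\<not> card S \<le> length fs"
    then obtain x y where x: "x \<in> carrier_vec n" "x \<noteq> 0\<^sub>v n" "\<forall>f\<in>set fs. f \<bullet> x = 0"
      and q: "x \<bullet> (A *\<^sub>v x) = (\<Sum>i\<in>{..<n} - T. d i * (y i)\<^sup>2)" "x \<bullet> x = (\<Sum>i\<in>{..<n} - T. (y i)\<^sup>2)"
      using test[OF fs, of T] \<open>card S + card T = n\<close> by (auto simp: T_def)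
    have "(\<Sum>i\<in>{..<n} - T. c * (y i)\<^sup>2) \<le> (\<Sum>i\<in>{..<n} - T. d i * (y i)\<^sup>2)"
      by (rule sum_mono) (auto simp: T_def intro: mult_right_mono)
    then show False using form[OF x] q by (simp add: sum_distrib_left)
  qed
  then have "\<not> c \<le> lam A (length fs + 1)"
    by (intro not_lam_if_card_le[OF eigs]) (use r in \<open>auto simp: S_def\<close>)
  then show ?thesis by simp
qed

lemma lam_antimono:
  fixes A :: "real mat"
  assumes A: "A \<in> carrier_mat n n" "transpose_mat A = A" and ij: "1 \<le> i" "i \<le> j" "j \<le> n"
  shows "lam A j \<le> lam A i"
proof -
  obtain d where eigs: "eigs A = rev (sort (map d [0..<n]))"
    using real_symmetric_mat_spectral_coordinates[OF A] by blast
  show ?thesis unfolding lam_def eigs by (rule sorted_rev_nth_mono) (use ij in auto)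
qed

lemma rayleigh_le_lam1:
  fixes A :: "real mat"
  assumes A: "A \<in> carrier_mat n n" "transpose_mat A = A" and x: "x \<in> carrier_vec n"
  shows "x \<bullet> (A *\<^sub>v x) \<le> lam A 1 * (x \<bullet> x)"
proof -
  obtain P d where "P \<in> carrier_mat n n"
    and form: "\<And>x. x \<in> carrier_vec n \<Longrightarrow> x \<bullet> (A *\<^sub>v x) = (\<Sum>i<n. d i * ((transpose_mat P *\<^sub>v x) $ i)\<^sup>2)"
    and norm: "\<And>x. x \<in> carrier_vec n \<Longrightarrow> x \<bullet> x = (\<Sum>i<n. ((transpose_mat P *\<^sub>v x) $ i)\<^sup>2)"
    and eigs: "eigs A = rev (sort (map d [0..<n]))"
    by (rule real_symmetric_mat_spectral_coordinates[OF A]) blast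
  have sorted: "sorted (rev (eigs A))" and len: "length (eigs A) = n" unfolding eigs by simp_all
  have d_le: "d i \<le> lam A 1" if "i < n" for i
  proof -
    have "d i \<in> set (eigs A)" using that unfolding eigs by simp
    then obtain j where "j < n" "eigs A ! j = d i" using len by (auto simp: in_set_conv_nth)
    then show ?thesis using sorted_rev_nth_mono[OF sorted, of 0 j] len unfolding lam_def by simp
  qed
  have "(\<Sum>i<n. d i * ((transpose_mat P *\<^sub>v x) $ i)\<^sup>2) \<le> (\<Sum>i<n. lam A 1 * ((transpose_mat P *\<^sub>v x) $ i)\<^sup>2)"
    by (intro sum_mono mult_right_mono d_le) simp_all
  then show ?thesis unfolding form[OF x] norm[OF x] sum_distrib_left .
qed

lemma scalar_prod_self_eq_sum: "x \<in> carrier_vec n \<Longrightarrow> x \<bullet> x = (\<Sum>i<n. (x $ i)\<^sup>2 :: real)"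
  by (auto simp: scalar_prod_def lessThan_atLeast0 power2_eq_square intro!: sum.cong)

definition vertex_degree :: "nat \<Rightarrow> (nat \<Rightarrow> nat \<Rightarrow> bool) \<Rightarrow> nat \<Rightarrow> nat" where
  "vertex_degree n E i = card {k. k < n \<and> k \<noteq> i \<and> E i k}"

lemma vertex_degree_eq_sum: "real (vertex_degree n E i) = (\<Sum>j<n. if i \<noteq> j \<and> E i j then 1 else 0)"
proof -
  have "{k. k < n \<and> k \<noteq> i \<and> E i k} = {j \<in> {..<n}. i \<noteq> j \<and> E i j}" by auto
  then have "real (vertex_degree n E i) = (\<Sum>j\<in>{j \<in> {..<n}. i \<noteq> j \<and> E i j}. 1)"
    unfolding vertex_degree_def real_of_card by simp
  also have "\<dots> = (\<Sum>j<n. if i \<noteq> j \<and> E i j then 1 else 0)" by (rule sum.inter_filter) simp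
  finally show ?thesis .
qed

definition edge_sum :: "nat \<Rightarrow> (nat \<Rightarrow> nat \<Rightarrow> bool) \<Rightarrow> (real \<Rightarrow> real \<Rightarrow> real) \<Rightarrow> real vec \<Rightarrow> real" where
  "edge_sum n E f x = (\<Sum>i<n. \<Sum>j<n. if i \<noteq> j \<and> E i j then f (x $ i) (x $ j) else 0)"

lemma edge_sum_nonneg: "(\<And>a b. 0 \<le> f a b) \<Longrightarrow> 0 \<le> edge_sum n E f x"
  unfolding edge_sum_def by (intro sum_nonneg) auto

lemma edge_sum_eq_0D:
  assumes f: "\<And>a b. 0 \<le> f a b" and zero: "edge_sum n E f x = 0"
    and ij: "i < n" "j < n" "i \<noteq> j" "E i j"
  shows "f (x $ i) (x $ j) = 0"
proof -
  have "\<forall>i\<in>{..<n}. (\<Sum>j<n. if i \<noteq> j \<and> E i j then f (x $ i) (x $ j) else 0) = 0"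
    using zero f unfolding edge_sum_def by (subst sum_nonneg_eq_0_iff[symmetric]) (auto intro: sum_nonneg)
  then have "\<forall>j\<in>{..<n}. (if i \<noteq> j \<and> E i j then f (x $ i) (x $ j) else 0) = 0"
    using ij f by (subst sum_nonneg_eq_0_iff[symmetric]) auto
  from bspec[OF this, of j] show ?thesis using ij by simp
qed

lemma edge_sum_disj:
  assumes "\<And>i j. \<not> (E1 i j \<and> E2 i j)"
  shows "edge_sum n (\<lambda>i j. E1 i j \<or> E2 i j) f x = edge_sum n E1 f x + edge_sum n E2 f x"
  unfolding edge_sum_def sum.distrib[symmetric] by (intro sum.cong refl) (use assms in auto)

lemma sum_lessThan_if_subset:
  fixes n :: nat
  assumes "K \<subseteq> {..<n}"
  shows "(\<Sum>i<n. if i \<in> K then f i else 0) = sum f K"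
proof -
  have "(\<Sum>i<n. if i \<in> K then f i else 0) = sum f ({..<n} \<inter> K)" by (rule sum.inter_restrict[symmetric]) simp
  also have "{..<n} \<inter> K = K" using assms by blast
  finally show ?thesis .
qed

lemma edge_sum_clique:
  assumes K: "K \<subseteq> {..<n}"
  shows "edge_sum n (\<lambda>i j. i \<in> K \<and> j \<in> K) (\<lambda>a b. (a - b)\<^sup>2) x
    = 2 * real (card K) * (\<Sum>i\<in>K. (x $ i)\<^sup>2) - 2 * (\<Sum>i\<in>K. x $ i)\<^sup>2"
proof -
  have "edge_sum n (\<lambda>i j. i \<in> K \<and> j \<in> K) (\<lambda>a b. (a - b)\<^sup>2) x
      = (\<Sum>i<n. if i \<in> K then (\<Sum>j<n. if j \<in> K then (x $ i - x $ j)\<^sup>2 else 0) else 0)"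
    unfolding edge_sum_def by (auto intro!: sum.cong)
  also have "\<dots> = (\<Sum>i\<in>K. \<Sum>j\<in>K. (x $ i)\<^sup>2 + (x $ j)\<^sup>2 - 2 * (x $ i * x $ j))"
    unfolding sum_lessThan_if_subset[OF K] by (simp add: power2_diff mult.assoc)
  also have "\<dots> = (\<Sum>i\<in>K. card K * (x $ i)\<^sup>2 + (\<Sum>j\<in>K. (x $ j)\<^sup>2) - 2 * (x $ i * (\<Sum>j\<in>K. x $ j)))"
    by (simp add: sum.distrib sum_subtractf sum_distrib_left)
  also have "\<dots> = 2 * real (card K) * (\<Sum>i\<in>K. (x $ i)\<^sup>2) - 2 * (\<Sum>i\<in>K. x $ i)\<^sup>2"
    by (simp add: sum.distrib sum_subtractf sum_distrib_left[symmetric] sum_distrib_right[symmetric]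
        power2_eq_square)
  finally show ?thesis .
qed

text \<open>Summing \<open>(a - b)\<^sup>2 = 2 a\<^sup>2 + 2 b\<^sup>2 - (a + b)\<^sup>2\<close> over the edges.\<close>
lemma edge_sum_signless:
  assumes sym: "\<And>i j. R i j = R j i"
  shows "edge_sum n R (\<lambda>a b. (a - b)\<^sup>2) x
    = 4 * (\<Sum>i<n. vertex_degree n R i * (x $ i)\<^sup>2) - edge_sum n R (\<lambda>a b. (a + b)\<^sup>2) x"
proof -
  let ?e = "\<lambda>i j. i \<noteq> j \<and> R i j"
  have swap: "(\<Sum>i<n. \<Sum>j<n. if ?e i j then (x $ j)\<^sup>2 else 0) = (\<Sum>i<n. \<Sum>j<n. if ?e i j then (x $ i)\<^sup>2 else 0)"
    by (subst sum.swap) (auto intro!: sum.cong simp: sym)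
  have deg: "(\<Sum>i<n. \<Sum>j<n. if ?e i j then (x $ i)\<^sup>2 else 0) = (\<Sum>i<n. vertex_degree n R i * (x $ i)\<^sup>2)"
    unfolding vertex_degree_eq_sum sum_distrib_right by (intro sum.cong refl) auto
  have "edge_sum n R (\<lambda>a b. (a - b)\<^sup>2) x = (\<Sum>i<n. \<Sum>j<n. 2 * (if ?e i j then (x $ i)\<^sup>2 else 0)
      + 2 * (if ?e i j then (x $ j)\<^sup>2 else 0) - (if ?e i j then (x $ i + x $ j)\<^sup>2 else 0))"
    unfolding edge_sum_def by (intro sum.cong refl) (auto simp: power2_eq_square algebra_simps)
  also have "\<dots> = 2 * (\<Sum>i<n. \<Sum>j<n. if ?e i j then (x $ i)\<^sup>2 else 0)
      + 2 * (\<Sum>i<n. \<Sum>j<n. if ?e i j then (x $ j)\<^sup>2 else 0) - edge_sum n R (\<lambda>a b. (a + b)\<^sup>2) x"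
    unfolding edge_sum_def by (simp add: sum.distrib sum_subtractf sum_distrib_left)
  finally show ?thesis unfolding swap deg by simp
qed

lemma laplacian_dim [simp]: "dim_row (laplacian n E) = n" "dim_col (laplacian n E) = n"
  unfolding laplacian_def by simp_all

lemma laplacian_carrier [simp]: "laplacian n E \<in> carrier_mat n n"
  by (simp add: carrier_matI)

lemma laplacian_symmetric: "(\<And>i j. E i j = E j i) \<Longrightarrow> transpose_mat (laplacian n E) = laplacian n E"
  unfolding laplacian_def by (rule eq_matI) auto

lemma laplacian_cong:
  assumes "\<And>i j. i < n \<Longrightarrow> j < n \<Longrightarrow> i \<noteq> j \<Longrightarrow> E i j = E' i j"
  shows "laplacian n E = laplacian n E'"
proof -
  have "{k. k < n \<and> k \<noteq> i \<and> E i k} = {k. k < n \<and> k \<noteq> i \<and> E' i k}" if "i < n" for i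
    using assms that by auto
  then show ?thesis unfolding laplacian_def by (intro eq_matI) (auto simp: assms)
qed

lemma laplacian_mult_vec_nth:
  assumes x: "x \<in> carrier_vec n" and i: "i < n"
  shows "(laplacian n E *\<^sub>v x) $ i = (\<Sum>j<n. if i \<noteq> j \<and> E i j then x $ i - x $ j else 0)"
proof -
  have "(laplacian n E *\<^sub>v x) $ i = (\<Sum>j<n. laplacian n E $$ (i,j) * x $ j)"
    using x i by (auto simp: laplacian_def mult_mat_vec_def scalar_prod_def lessThan_atLeast0 intro!: sum.cong)
  also have "\<dots> = (\<Sum>j<n. (if i = j then real (vertex_degree n E i) * x $ i else 0)
      - (if i \<noteq> j \<and> E i j then x $ j else 0))"
    using i by (intro sum.cong refl) (auto simp: laplacian_def vertex_degree_def)
  also have "\<dots> = real (vertex_degree n E i) * x $ i - (\<Sum>j<n. if i \<noteq> j \<and> E i j then x $ j else 0)"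
    using i by (simp add: sum_subtractf sum.delta'[OF finite_lessThan])
  also have "\<dots> = (\<Sum>j<n. if i \<noteq> j \<and> E i j then x $ i - x $ j else 0)"
    unfolding vertex_degree_eq_sum
    by (simp add: sum_distrib_right sum_subtractf[symmetric] if_distrib cong: if_cong)
  finally show ?thesis .
qed

lemma laplacian_quadratic_form:
  assumes sym: "\<And>i j. E i j = E j i" and x: "x \<in> carrier_vec n"
  shows "2 * (x \<bullet> (laplacian n E *\<^sub>v x)) = edge_sum n E (\<lambda>a b. (a - b)\<^sup>2) x"
proof -
  let ?e = "\<lambda>i j. i \<noteq> j \<and> E i j"
  have "x \<bullet> (laplacian n E *\<^sub>v x) = (\<Sum>i<n. x $ i * (laplacian n E *\<^sub>v x) $ i)"
    using x by (auto simp: scalar_prod_def lessThan_atLeast0)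
  also have "\<dots> = (\<Sum>i<n. \<Sum>j<n. if ?e i j then x $ i * (x $ i - x $ j) else 0)"
    by (intro sum.cong refl, subst laplacian_mult_vec_nth[OF x]) (auto simp: sum_distrib_left if_distrib cong: if_cong)
  finally have half: "x \<bullet> (laplacian n E *\<^sub>v x) = (\<Sum>i<n. \<Sum>j<n. if ?e i j then x $ i * (x $ i - x $ j) else 0)" .
  have swap: "(\<Sum>i<n. \<Sum>j<n. if ?e i j then x $ j * (x $ j - x $ i) else 0)
      = (\<Sum>i<n. \<Sum>j<n. if ?e i j then x $ i * (x $ i - x $ j) else 0)"
    by (subst sum.swap) (auto intro!: sum.cong simp: sym)
  have "edge_sum n E (\<lambda>a b. (a - b)\<^sup>2) x = (\<Sum>i<n. \<Sum>j<n. (if ?e i j then x $ i * (x $ i - x $ j) else 0)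
      + (if ?e i j then x $ j * (x $ j - x $ i) else 0))"
    unfolding edge_sum_def by (intro sum.cong refl) (auto simp: power2_eq_square algebra_simps)
  then show ?thesis unfolding sum.distrib swap half by simp
qed

lemma laplacian_form_nonneg:
  "(\<And>i j. E i j = E j i) \<Longrightarrow> x \<in> carrier_vec n \<Longrightarrow> 0 \<le> x \<bullet> (laplacian n E *\<^sub>v x)"
  using laplacian_quadratic_form[of E x n] edge_sum_nonneg[of "\<lambda>a b. (a - b)\<^sup>2" n E x] by simp

text \<open>A graph containing the path \<open>0, 1, \<dots>, n - 1\<close> is connected, so its Laplacian form vanishes
  only on constant vectors.\<close>
lemma laplacian_form_pos_if_path:
  assumes sym: "\<And>i j. E i j = E j i" and path: "\<And>i. Suc i < n \<Longrightarrow> E i (Suc i)"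
    and x: "x \<in> carrier_vec n" "x \<noteq> 0\<^sub>v n" "x $ 0 = 0"
  shows "0 < x \<bullet> (laplacian n E *\<^sub>v x)"
proof (rule ccontr)
  assume "\<not> ?thesis"
  then have "x \<bullet> (laplacian n E *\<^sub>v x) = 0" using laplacian_form_nonneg[of E x n] sym x(1) by simp
  then have "edge_sum n E (\<lambda>a b. (a - b)\<^sup>2) x = 0" using laplacian_quadratic_form[of E, OF sym x(1)] by simp
  then have step: "x $ Suc i = x $ i" if "Suc i < n" for i
    using edge_sum_eq_0D[of "\<lambda>a b. (a - b)\<^sup>2" n E x i "Suc i"] path that by simp
  have "x $ i = 0" if "i < n" for i
    using that by (induction i) (auto simp: x(3) step)
  then have "x = 0\<^sub>v n" using x(1) by (auto intro!: eq_vecI)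
  then show False using x(2) by simp
qed

lemma ckc_adj_sym: "ckc_adj p q1 q2 u v = ckc_adj p q1 q2 v u"
  unfolding ckc_adj_def by (auto simp: insert_commute min.commute abs_minus_commute)

lemma ckc_adj_consecutive:
  fixes p q1 q2 u :: int
  assumes "3 \<le> p" "-q1-p+2 \<le> u" "u + 1 \<le> q2 - 1"
  shows "ckc_adj p q1 q2 u (u + 1)"
proof -
  have "u \<le> -p-1 \<or> u = -p \<or> (-p+1 \<le> u \<and> u \<le> -1) \<or> u = 0 \<or> 1 \<le> u" by linarith
  then show ?thesis unfolding ckc_adj_def using assms by (elim disjE) (auto simp: doubleton_eq_iff)
qed

lemma ckc_adj_iff:
  fixes p q1 q2 u v :: int
  assumes "3 \<le> p" and "u \<in> {-q1-p+2..q2-1}" and "v \<in> {-q1-p+2..q2-1}"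
  shows "ckc_adj p q1 q2 u v \<longleftrightarrow>
    u \<noteq> v \<and> ((u \<in> {-p+1..0} \<and> v \<in> {-p+1..0}) \<or> u + 1 = v \<or> v + 1 = u)"
proof
  assume "ckc_adj p q1 q2 u v"
  then show "u \<noteq> v \<and> ((u \<in> {-p+1..0} \<and> v \<in> {-p+1..0}) \<or> u + 1 = v \<or> v + 1 = u)"
    unfolding ckc_adj_def doubleton_eq_iff by (auto simp: abs_if split: if_splits)
next
  assume "u \<noteq> v \<and> ((u \<in> {-p+1..0} \<and> v \<in> {-p+1..0}) \<or> u + 1 = v \<or> v + 1 = u)"
  then consider "u \<noteq> v" "u \<in> {-p+1..0}" "v \<in> {-p+1..0}" | "v = u + 1" | "u = v + 1" by auto
  then show "ckc_adj p q1 q2 u v"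
  proof cases
    case 1
    then show ?thesis unfolding ckc_adj_def by auto
  next
    case 2
    then show ?thesis using ckc_adj_consecutive[of p q1 u q2] assms by auto
  next
    case 3
    then show ?thesis using ckc_adj_consecutive[of p q1 v q2] ckc_adj_sym[of p q1 q2 u v] assms by auto
  qed
qed

text \<open>After shifting vertex names by \<open>q\<^sub>1 + p - 2\<close>, the graph \<open>C\<^sub>q\<^sub>1 \<oplus> K\<^sub>p \<oplus> C\<^sub>q\<^sub>2\<close> is the path on
  \<open>0, \<dots>, n - 1\<close> with the segment \<open>{q\<^sub>1 - 1..q\<^sub>1 + p - 2}\<close> completed to a clique.\<close>
definition clique_path :: "nat \<Rightarrow> nat \<Rightarrow> nat \<Rightarrow> nat \<Rightarrow> bool" where
  "clique_path lo hi i j \<longleftrightarrow> i + 1 = j \<or> j + 1 = i \<or> (i \<in> {lo..hi} \<and> j \<in> {lo..hi})"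

lemma ckc_laplacian_eq_clique_path:
  assumes p: "3 \<le> p" and q1: "2 \<le> q1"
  shows "ckc_laplacian p q1 q2 = laplacian (p + q1 + q2 - 2) (clique_path (q1 - 1) (q1 + p - 2))"
  unfolding ckc_laplacian_def
proof (rule laplacian_cong)
  fix i j assume i: "i < p + q1 + q2 - 2" and j: "j < p + q1 + q2 - 2" and ij: "i \<noteq> j"
  have o: "int (q1 + p - 2) = int q1 + int p - 2" using p q1 by simp
  show "ckc_adj (int p) (int q1) (int q2) (int i - int (q1 + p - 2)) (int j - int (q1 + p - 2))
      \<longleftrightarrow> clique_path (q1 - 1) (q1 + p - 2) i j"
    by (subst ckc_adj_iff) (use p q1 i j ij in \<open>auto simp: o clique_path_def\<close>)
qed

definition path_off_clique :: "nat \<Rightarrow> nat \<Rightarrow> nat \<Rightarrow> nat \<Rightarrow> bool" where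
  "path_off_clique lo hi i j \<longleftrightarrow> (i + 1 = j \<or> j + 1 = i) \<and> \<not> (i \<in> {lo..hi} \<and> j \<in> {lo..hi})"

locale clique_path_graph =
  fixes n lo hi :: nat
  assumes lo_pos: "0 < lo" and lo_less_hi: "lo < hi" and hi_less_n: "hi < n"
begin

abbreviation "K \<equiv> {lo..hi}"
abbreviation "R \<equiv> path_off_clique lo hi"
abbreviation "L \<equiv> laplacian n (clique_path lo hi)"

lemma K_subset: "K \<subseteq> {..<n}"
  using hi_less_n by auto

lemma L_symmetric: "transpose_mat L = L"
  by (rule laplacian_symmetric) (auto simp: clique_path_def)

lemma degree_R_le_2: "vertex_degree n R i \<le> 2"
proof -
  have "vertex_degree n R i \<le> card {i + 1, i - 1}"
    unfolding vertex_degree_def by (rule card_mono) (auto simp: path_off_clique_def)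
  also have "\<dots> \<le> 2" by (simp add: card_insert_if)
  finally show ?thesis .
qed

lemma degree_R_clique: "i \<in> K \<Longrightarrow> vertex_degree n R i \<le> 1"
proof -
  assume i: "i \<in> K"
  have "vertex_degree n R i \<le> card {if i < hi then i - 1 else i + 1}"
    unfolding vertex_degree_def by (rule card_mono) (use i lo_less_hi in \<open>auto simp: path_off_clique_def\<close>)
  then show ?thesis by simp
qed

lemma degree_R_interior: "lo < i \<Longrightarrow> i < hi \<Longrightarrow> vertex_degree n R i = 0"
  unfolding vertex_degree_def path_off_clique_def by (auto intro!: card_eq_0_iff[THEN iffD2])

lemma degree_R_0: "vertex_degree n R 0 \<le> 1"
proof -
  have "vertex_degree n R 0 \<le> card {1 :: nat}"
    unfolding vertex_degree_def by (rule card_mono) (auto simp: path_off_clique_def)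
  then show ?thesis by simp
qed

lemma quadratic_form:
  assumes x: "x \<in> carrier_vec n"
  shows "2 * (x \<bullet> (L *\<^sub>v x)) = 2 * real (card K) * (\<Sum>i\<in>K. (x $ i)\<^sup>2) - 2 * (\<Sum>i\<in>K. x $ i)\<^sup>2
    + edge_sum n R (\<lambda>a b. (a - b)\<^sup>2) x"
proof -
  have split: "clique_path lo hi = (\<lambda>i j. (i \<in> K \<and> j \<in> K) \<or> R i j)"
    by (auto simp: clique_path_def path_off_clique_def fun_eq_iff)
  have "2 * (x \<bullet> (L *\<^sub>v x)) = edge_sum n (clique_path lo hi) (\<lambda>a b. (a - b)\<^sup>2) x"
    by (rule laplacian_quadratic_form[OF _ x]) (auto simp: clique_path_def)
  also have "\<dots> = edge_sum n (\<lambda>i j. (i \<in> K \<and> j \<in> K) \<or> R i j) (\<lambda>a b. (a - b)\<^sup>2) x"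
    unfolding split ..
  also have "\<dots> = edge_sum n (\<lambda>i j. i \<in> K \<and> j \<in> K) (\<lambda>a b. (a - b)\<^sup>2) x + edge_sum n R (\<lambda>a b. (a - b)\<^sup>2) x"
    by (rule edge_sum_disj) (auto simp: path_off_clique_def)
  finally show ?thesis unfolding edge_sum_clique[OF K_subset] .
qed

lemma R_signless:
  "edge_sum n R (\<lambda>a b. (a - b)\<^sup>2) x
    = 4 * (\<Sum>i<n. vertex_degree n R i * (x $ i)\<^sup>2) - edge_sum n R (\<lambda>a b. (a + b)\<^sup>2) x"
  by (rule edge_sum_signless) (auto simp: path_off_clique_def)

lemma sum_split_K: "(\<Sum>i<n. f i) = (\<Sum>i\<in>K. f i) + (\<Sum>i\<in>{..<n} - K. f i)"
  using sum.subset_diff[OF K_subset, of f] by (simp add: add.commute)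

end

context clique_path_graph
begin

lemma form_ge_if_supported_on_K:
  assumes x: "x \<in> carrier_vec n" and supp: "\<And>i. i < n \<Longrightarrow> i \<notin> K \<Longrightarrow> x $ i = 0"
    and sum_zero: "(\<Sum>i\<in>K. x $ i) = 0"
  shows "card K * (x \<bullet> x) \<le> x \<bullet> (L *\<^sub>v x)"
proof -
  have "x \<bullet> x = (\<Sum>i\<in>K. (x $ i)\<^sup>2)"
    unfolding scalar_prod_self_eq_sum[OF x] sum_split_K using supp by simp
  moreover have "0 \<le> edge_sum n R (\<lambda>a b. (a - b)\<^sup>2) x" by (rule edge_sum_nonneg) simp
  ultimately show ?thesis using quadratic_form[OF x] sum_zero by simp
qed

lemma form_le_clique_and_degree:
  assumes x: "x \<in> carrier_vec n"
  shows "2 * (x \<bullet> (L *\<^sub>v x))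
    \<le> 2 * real (card K) * (\<Sum>i\<in>K. (x $ i)\<^sup>2) + 4 * (\<Sum>i<n. vertex_degree n R i * (x $ i)\<^sup>2)"
proof -
  have "0 \<le> edge_sum n R (\<lambda>a b. (a + b)\<^sup>2) x" by (rule edge_sum_nonneg) simp
  then show ?thesis
    using quadratic_form[OF x] R_signless[of x] zero_le_power2[of "\<Sum>i\<in>K. x $ i"] by linarith
qed

lemma form_le_if_vanishing_at_ends:
  assumes x: "x \<in> carrier_vec n" and ends: "x $ lo = 0" "x $ hi = 0" and K4: "4 \<le> card K"
  shows "x \<bullet> (L *\<^sub>v x) \<le> card K * (x \<bullet> x)"
proof -
  have "vertex_degree n R i * (x $ i)\<^sup>2 = 0" if "i \<in> K" for i
    using that ends degree_R_interior[of i] by (cases "i = lo \<or> i = hi") auto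
  then have "(\<Sum>i\<in>K. vertex_degree n R i * (x $ i)\<^sup>2) = 0" by (rule sum.neutral[rule_format])
  then have "(\<Sum>i<n. vertex_degree n R i * (x $ i)\<^sup>2) = (\<Sum>i\<in>{..<n} - K. vertex_degree n R i * (x $ i)\<^sup>2)"
    unfolding sum_split_K by simp
  also have "\<dots> \<le> (\<Sum>i\<in>{..<n} - K. 2 * (x $ i)\<^sup>2)"
    using degree_R_le_2 by (intro sum_mono mult_right_mono) auto
  finally have deg: "(\<Sum>i<n. vertex_degree n R i * (x $ i)\<^sup>2) \<le> 2 * (\<Sum>i\<in>{..<n} - K. (x $ i)\<^sup>2)"
    by (simp add: sum_distrib_left)
  have "8 * (\<Sum>i\<in>{..<n} - K. (x $ i)\<^sup>2) \<le> 2 * real (card K) * (\<Sum>i\<in>{..<n} - K. (x $ i)\<^sup>2)"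
    using K4 by (intro mult_right_mono sum_nonneg) auto
  then show ?thesis
    using form_le_clique_and_degree[OF x] deg scalar_prod_self_eq_sum[OF x] sum_split_K[of "\<lambda>i. (x $ i)\<^sup>2"]
    by (simp add: algebra_simps)
qed

lemma form_le_card_K_plus_2:
  assumes x: "x \<in> carrier_vec n"
  shows "x \<bullet> (L *\<^sub>v x) \<le> (real (card K) + 2) * (x \<bullet> x)"
proof -
  have "vertex_degree n R i * (x $ i)\<^sup>2 \<le> 1 * (x $ i)\<^sup>2" if "i \<in> K" for i
    using degree_R_clique[OF that] by (intro mult_right_mono) auto
  moreover have "vertex_degree n R i * (x $ i)\<^sup>2 \<le> 2 * (x $ i)\<^sup>2" for i
    using degree_R_le_2[of i] by (intro mult_right_mono) auto
  ultimately have deg: "(\<Sum>i<n. vertex_degree n R i * (x $ i)\<^sup>2)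
      \<le> (\<Sum>i\<in>K. (x $ i)\<^sup>2) + 2 * (\<Sum>i\<in>{..<n} - K. (x $ i)\<^sup>2)"
    unfolding sum_split_K sum_distrib_left by (intro add_mono sum_mono) auto
  have "8 * (\<Sum>i\<in>{..<n} - K. (x $ i)\<^sup>2) \<le> (2 * real (card K) + 4) * (\<Sum>i\<in>{..<n} - K. (x $ i)\<^sup>2)"
    using lo_less_hi by (intro mult_right_mono sum_nonneg) auto
  then show ?thesis
    using form_le_clique_and_degree[OF x] deg scalar_prod_self_eq_sum[OF x] sum_split_K[of "\<lambda>i. (x $ i)\<^sup>2"]
    by (simp add: algebra_simps)
qed

lemma eq_zero_if_signless_form_zero:
  assumes x: "x \<in> carrier_vec n" and low_degree: "\<And>i. i < n \<Longrightarrow> vertex_degree n R i \<le> 1 \<Longrightarrow> x $ i = 0"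
    and S: "edge_sum n R (\<lambda>a b. (a + b)\<^sup>2) x = 0"
  shows "x = 0\<^sub>v n"
proof -
  have "x $ i = 0" if "i < n" for i
    using that
  proof (induction i)
    case 0
    then show ?case using low_degree degree_R_0 by simp
  next
    case (Suc i)
    show ?case
    proof (cases "Suc i \<in> K")
      case True
      then show ?thesis using low_degree degree_R_clique Suc.prems by blast
    next
      case False
      then have "R i (Suc i)" by (simp add: path_off_clique_def)
      then have "(x $ i + x $ Suc i)\<^sup>2 = 0"
        using edge_sum_eq_0D[of "\<lambda>a b. (a + b)\<^sup>2", OF _ S] Suc.prems by simp
      then show ?thesis using Suc by simp
    qed
  qed
  then show ?thesis using x by (auto intro!: eq_vecI)
qed

text \<open>On vectors constant on \<open>K\<close> the clique part of the form vanishes, and no vertex has more than two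
  path edges outside the clique; equality in the resulting bound \<open>8 |x|\<^sup>2\<close> would force \<open>x = 0\<close>.\<close>
lemma form_lt_4_if_constant_on_K:
  assumes x: "x \<in> carrier_vec n" "x \<noteq> 0\<^sub>v n" and const: "\<And>i. i \<in> K \<Longrightarrow> x $ i = x $ lo"
  shows "x \<bullet> (L *\<^sub>v x) < 4 * (x \<bullet> x)"
proof (rule ccontr)
  assume not_less: "\<not> ?thesis"
  let ?S = "edge_sum n R (\<lambda>a b. (a + b)\<^sup>2) x"
  let ?t = "\<lambda>i. (2 - real (vertex_degree n R i)) * (x $ i)\<^sup>2"
  have "(\<Sum>i\<in>K. x $ i) = (\<Sum>i\<in>K. x $ lo)" "(\<Sum>i\<in>K. (x $ i)\<^sup>2) = (\<Sum>i\<in>K. (x $ lo)\<^sup>2)"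
    by (rule sum.cong[OF refl], metis const)+
  then have "2 * (x \<bullet> (L *\<^sub>v x)) = 4 * (\<Sum>i<n. vertex_degree n R i * (x $ i)\<^sup>2) - ?S"
    using quadratic_form[OF x(1)] R_signless[of x] by (simp add: power2_eq_square)
  moreover have "(\<Sum>i<n. ?t i) = 2 * (x \<bullet> x) - (\<Sum>i<n. vertex_degree n R i * (x $ i)\<^sup>2)"
    unfolding scalar_prod_self_eq_sum[OF x(1)] by (simp add: algebra_simps sum_subtractf sum_distrib_left)
  ultimately have le: "4 * (\<Sum>i<n. ?t i) + ?S \<le> 0" using not_less by linarith
  have t_nonneg: "0 \<le> ?t i" for i
    using degree_R_le_2[of i] by simp
  have "0 \<le> (\<Sum>i<n. ?t i)" by (rule sum_nonneg) (rule t_nonneg)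
  moreover have "0 \<le> ?S" by (rule edge_sum_nonneg) simp
  ultimately have t: "(\<Sum>i<n. ?t i) = 0" and S: "?S = 0" using le by linarith+
  have "\<forall>i\<in>{..<n}. ?t i = 0" using t t_nonneg by (subst (asm) sum_nonneg_eq_0_iff) auto
  then have zero_if_deg_le_1: "x $ i = 0" if "i < n" "vertex_degree n R i \<le> 1" for i
    using that by force
  have "x = 0\<^sub>v n" by (rule eq_zero_if_signless_form_zero[OF x(1) zero_if_deg_le_1 S])
  then show False using x(2) by simp
qed

end

context clique_path_graph
begin

lemma n_ge_3: "3 \<le> n"
  using lo_pos lo_less_hi hi_less_n by linarith

lemma lam_card_K_minus_1_ge: "card K \<le> lam L (card K - 1)"
proof -
  define fs :: "real vec list"
    where "fs = map (unit_vec n) (sorted_list_of_set ({..<n} - K)) @ [vec n (\<lambda>i. if i \<in> K then 1 else 0)]"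
  have "card K \<le> n" using card_mono[OF _ K_subset] by simp
  moreover have "length fs = n - card K + 1" using K_subset by (simp add: fs_def card_Diff_subset)
  ultimately have len: "card K - 1 + length fs = n" using lo_less_hi by simp
  show ?thesis
  proof (rule courant_fischer_lower[OF laplacian_carrier L_symmetric, where fs = fs])
    show "set fs \<subseteq> carrier_vec n" by (auto simp: fs_def)
    show "0 < card K - 1" "card K - 1 + length fs \<le> n" using lo_less_hi len by simp_all
    fix x :: "real vec" assume x: "x \<in> carrier_vec n" and orth: "\<forall>f\<in>set fs. f \<bullet> x = 0"
    have "x $ i = 0" if "i < n" "i \<notin> K" for i
      using orth x that by (auto simp: fs_def)
    moreover have "(\<Sum>i\<in>K. x $ i) = 0"
    proof -
      have "vec n (\<lambda>i. if i \<in> K then 1 else 0) \<bullet> x = 0" using orth by (simp add: fs_def)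
      then show ?thesis using x sum_lessThan_if_subset[OF K_subset, of "\<lambda>i. x $ i"]
        by (simp add: scalar_prod_def lessThan_atLeast0 if_distrib[of "\<lambda>c. c * _"] cong: if_cong)
    qed
    ultimately show "card K * (x \<bullet> x) \<le> x \<bullet> (L *\<^sub>v x)" by (rule form_ge_if_supported_on_K[OF x])
  qed
qed

lemma lam_3_le_card_K:
  assumes "4 \<le> card K"
  shows "lam L 3 \<le> card K"
proof -
  define fs :: "real vec list" where "fs = [unit_vec n lo, unit_vec n hi]"
  have "lam L (length fs + 1) \<le> card K"
  proof (rule courant_fischer_upper[OF laplacian_carrier L_symmetric])
    show "set fs \<subseteq> carrier_vec n" "length fs < n" using n_ge_3 by (auto simp: fs_def)
    fix x :: "real vec" assume x: "x \<in> carrier_vec n" and "\<forall>f\<in>set fs. f \<bullet> x = 0"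
    then have "x $ lo = 0" "x $ hi = 0" using lo_less_hi hi_less_n by (auto simp: fs_def)
    then show "x \<bullet> (L *\<^sub>v x) \<le> card K * (x \<bullet> x)" by (rule form_le_if_vanishing_at_ends[OF x _ _ assms])
  qed
  then show ?thesis by (simp add: fs_def numeral_3_eq_3)
qed

lemma lam_1_le_card_K_plus_2: "lam L 1 \<le> real (card K) + 2"
  using courant_fischer_upper[OF laplacian_carrier L_symmetric, where fs = "[]"] n_ge_3
    form_le_card_K_plus_2 by simp

lemma lam_card_K_less_4: "lam L (card K) < 4"
proof -
  define fs :: "real vec list" where "fs = map (\<lambda>i. unit_vec n i - unit_vec n lo) [Suc lo..<Suc hi]"
  have len: "length fs + 1 = card K" using lo_less_hi by (simp add: fs_def)
  have "lam L (length fs + 1) < 4"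
  proof (rule courant_fischer_upper_strict[OF laplacian_carrier L_symmetric])
    show "set fs \<subseteq> carrier_vec n" by (auto simp: fs_def)
    show "length fs < n" using len hi_less_n by simp
    fix x :: "real vec" assume x: "x \<in> carrier_vec n" "x \<noteq> 0\<^sub>v n" and orth: "\<forall>f\<in>set fs. f \<bullet> x = 0"
    have "x $ i = x $ lo" if "i \<in> K" for i
    proof (cases "i = lo")
      case False
      then have "i \<in> set [Suc lo..<Suc hi]" using that by auto
      then have "unit_vec n i - unit_vec n lo \<in> set fs" unfolding fs_def set_map by (rule imageI)
      then have "(unit_vec n i - unit_vec n lo) \<bullet> x = 0" using orth by blast
      moreover have "(unit_vec n i - unit_vec n lo) \<bullet> x = x $ i - x $ lo"
        using x that hi_less_n lo_less_hi by (subst minus_scalar_prod_distrib) auto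
      ultimately show ?thesis by simp
    qed simp
    then show "x \<bullet> (L *\<^sub>v x) < 4 * (x \<bullet> x)" by (rule form_lt_4_if_constant_on_K[OF x])
  qed
  then show ?thesis unfolding len .
qed

lemma lam_n_nonneg: "0 \<le> lam L n"
  using courant_fischer_lower[OF laplacian_carrier L_symmetric, where fs = "[]" and k = n and c = 0]
    laplacian_form_nonneg[of "clique_path lo hi"] n_ge_3 by (auto simp: clique_path_def)

lemma lam_n_minus_1_pos: "0 < lam L (n - 1)"
proof (rule courant_fischer_lower_strict[OF laplacian_carrier L_symmetric, where fs = "[unit_vec n 0]"])
  fix x :: "real vec"
  assume "x \<in> carrier_vec n" "x \<noteq> 0\<^sub>v n" "\<forall>f\<in>set [unit_vec n 0]. f \<bullet> x = 0"
  then show "0 * (x \<bullet> x) < x \<bullet> (L *\<^sub>v x)"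
    using laplacian_form_pos_if_path[of "clique_path lo hi" n x] n_ge_3 by (auto simp: clique_path_def)
qed (use n_ge_3 in auto)

lemma spectrum_bounds:
  assumes K4: "4 \<le> card K" and n: "card K + 2 \<le> n"
  defines "p \<equiv> card K"
  shows "lam L 1 \<in> {real p .. real p + 2} \<and> lam L 2 \<in> {real p .. real p + 2} \<and>
    (\<forall>j \<in> {3 .. p - 1}. lam L j = p) \<and> lam L p \<in> {0 <..< 4} \<and> lam L (p + 1) \<in> {0 <..< 4} \<and>
    (\<forall>j \<in> {p + 3 .. n}. lam L j \<in> {0 ..< 4})"
proof -
  have p: "4 \<le> p" "p + 2 \<le> n" using K4 n by (simp_all add: p_def)
  have mono: "lam L j \<le> lam L i" if "1 \<le> i" "i \<le> j" "j \<le> n" for i j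
    using lam_antimono[OF laplacian_carrier L_symmetric that] .
  have lam_p_minus_1: "p \<le> lam L (p - 1)" and lam_3: "lam L 3 \<le> p" and lam_1: "lam L 1 \<le> real p + 2"
    and lam_p: "lam L p < 4"
    using lam_card_K_minus_1_ge lam_3_le_card_K[OF K4] lam_1_le_card_K_plus_2 lam_card_K_less_4 by (simp_all add: p_def)
  have "lam L (p - 1) \<le> lam L 2" "lam L 2 \<le> lam L 1" by (rule mono; use p in simp)+
  moreover have "lam L j = p" if "j \<in> {3 .. p - 1}" for j
  proof -
    have "lam L (p - 1) \<le> lam L j" "lam L j \<le> lam L 3" by (rule mono; use that p in auto)+
    then show ?thesis using lam_p_minus_1 lam_3 by simp
  qed
  moreover have "lam L (n - 1) \<le> lam L (p + 1)" "lam L (p + 1) \<le> lam L p" by (rule mono; use p in simp)+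
  moreover have "0 \<le> lam L j \<and> lam L j < 4" if "j \<in> {p + 3 .. n}" for j
  proof -
    have "lam L n \<le> lam L j" "lam L j \<le> lam L p" by (rule mono; use that p in auto)+
    then show ?thesis using lam_n_nonneg lam_p by simp
  qed
  ultimately show ?thesis using lam_p_minus_1 lam_1 lam_p lam_n_minus_1_pos by auto
qed

end

lemma path_laplacian_lam1_ge:
  assumes m: "3 \<le> m"
  shows "5 / 2 \<le> lam (path_laplacian m) 1"
proof -
  let ?E = "\<lambda>i j. i + 1 = j \<or> j + 1 = (i::nat)"
  let ?L = "path_laplacian m"
  have L: "?L \<in> carrier_mat m m" "transpose_mat ?L = ?L"
    unfolding path_laplacian_def by (auto intro: laplacian_symmetric)
  define v :: "real vec" where "v = unit_vec m 0 - unit_vec m 1"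
  have v: "v \<in> carrier_vec m" unfolding v_def by simp
  have e: "(unit_vec m 0 :: real vec) \<in> carrier_vec m" "(unit_vec m 1 :: real vec) \<in> carrier_vec m" by auto
  have m01: "0 < m" "1 < m" using m by auto
  have "{k. k < m \<and> k \<noteq> 0 \<and> ?E 0 k} = {1}" "{k. k < m \<and> k \<noteq> 1 \<and> ?E 1 k} = {0, 2}" using m by auto
  then have entries: "?L $$ (0,0) = 1" "?L $$ (1,1) = 2" "?L $$ (0,1) = -1" "?L $$ (1,0) = -1"
    unfolding path_laplacian_def laplacian_def using m01 by simp_all
  have Lv: "?L *\<^sub>v v = ?L *\<^sub>v unit_vec m 0 - ?L *\<^sub>v unit_vec m 1"
    unfolding v_def by (rule mult_minus_distrib_mat_vec[OF L(1) e])
  have Lv_carrier: "?L *\<^sub>v v \<in> carrier_vec m" using L v by simp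
  have "v \<bullet> (?L *\<^sub>v v) = unit_vec m 0 \<bullet> (?L *\<^sub>v v) - unit_vec m 1 \<bullet> (?L *\<^sub>v v)"
    unfolding v_def by (rule minus_scalar_prod_distrib[OF e Lv_carrier[unfolded v_def]])
  also have "\<dots> = (?L *\<^sub>v v) $ 0 - (?L *\<^sub>v v) $ 1" using Lv_carrier m01 by simp
  also have "\<dots> = (?L $$ (0,0) - ?L $$ (0,1)) - (?L $$ (1,0) - ?L $$ (1,1))"
    unfolding Lv using L(1) m01 by simp
  finally have form: "v \<bullet> (?L *\<^sub>v v) = 5" unfolding entries by simp
  have "v \<bullet> v = 2"
    unfolding v_def using minus_scalar_prod_distrib[OF e v[unfolded v_def]] v m01 by (simp add: v_def)
  then show ?thesis using rayleigh_le_lam1[OF L v] form by simp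
qed

theorem lemma2:
  fixes p q1 q2 :: nat
  assumes "p \<ge> 6" and "q1 \<ge> 4" and "q2 \<ge> 4"
  defines "L \<equiv> ckc_laplacian p q1 q2"
      and "q \<equiv> max q1 q2"
  shows "lam L 1 \<in> {real p .. real p + 2} \<and>
         lam L 2 \<in> {real p .. real p + 2} \<and>
         (\<forall>j \<in> {3 .. p - 1}. lam L j = real p) \<and>
         lam L p \<in> {0 <..< min (lam (path_laplacian (q - 1)) 1 + 2) (real p)} \<and>
         lam L (p + 1) \<in> {0 <..< min (lam (path_laplacian (q - 1)) 1 + 2) (real p)} \<and>
         (\<forall>j \<in> {p + 3 .. p + q1 + q2 - 2}. lam L j \<in> {0 ..< 4})"
proof -
  define n where "n = p + q1 + q2 - 2"
  interpret G: clique_path_graph n "q1 - 1" "q1 + p - 2"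
    by unfold_locales (use assms in \<open>auto simp: n_def\<close>)
  have "L = laplacian n (clique_path (q1 - 1) (q1 + p - 2))"
    unfolding L_def n_def using assms by (simp add: ckc_laplacian_eq_clique_path)
  moreover have "card {q1 - 1 .. q1 + p - 2} = p" using assms by simp
  ultimately have bounds: "lam L 1 \<in> {real p .. real p + 2} \<and> lam L 2 \<in> {real p .. real p + 2} \<and>
      (\<forall>j \<in> {3 .. p - 1}. lam L j = p) \<and> lam L p \<in> {0 <..< 4} \<and> lam L (p + 1) \<in> {0 <..< 4} \<and>
      (\<forall>j \<in> {p + 3 .. n}. lam L j \<in> {0 ..< 4})"
    using G.spectrum_bounds assms by (simp add: n_def)
  have "3 \<le> q - 1" using assms by (simp add: q_def)
  then have "4 < min (lam (path_laplacian (q - 1)) 1 + 2) (real p)"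
    using path_laplacian_lam1_ge[of "q - 1"] assms by simp
  then show ?thesis using bounds unfolding n_def by auto
qed

end
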